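(* Let $n$ nodes run the algorithm TLCB described in the context. Suppose $0<t_r\le n-f$, $0<t_s\le t_r$, and $0<t_b\le n-f_b$ where $f_b=t_r(n-t_r)/(t_r-t_s+1)$, and at most $f$ nodes fail. Then TLCB (with the $k$-th call to TLCB on a node constituting that node's $k$-th logical time-step) implements a $\mathrm{TSB}(t_r,t_b,t_s)$ partial-spread broadcast abstraction.
   Context: Asynchronous network model. There are $n$ nodes numbered $1,\dots,n$; nodes may fail only by crashing permanently, after which they send no messages. A network-level Broadcast sends a message to all $n$ nodes (including the sender). Every message sent to a node that does not fail is eventually delivered after an arbitrary finite delay, and messages between each pair of nodes are delivered in the order sent. $\mathrm{Receive}()$ waits for and returns the next delivered message. Algorithm TLCR (node $i$, receive threshold $t_r$). Persistent state: a list $\vec R$ of sets, initially $[\{\}]$; $\vec R_k$ is its $k$-th element. On a call $\mathrm{TLCR}(m)$: append $\{\}$ to $\vec R$ and let $s=|\vec R|$; network-broadcast $\langle i,m,s,\vec R_{s-1}\rangle$; while $|\vec R_s|<t_r$: receive $\langle j,m',s',R'\rangle$; if $s'=s$, add $\langle j,m'\rangle$ to $\vec R_s$; else if $s'>s$, set $\vec R_s\leftarrow\vec R_s\cup R'$ (messages with $s'<s$ are ignored). Return $(\{m'\mid\langle j,m'\rangle\in\vec R_s\},\{\})$. Algorithm TLCB (node $i$, thresholds $t_r$, $t_s\le t_r$), built on TLCR with receive threshold $t_r$. On a call $\mathrm{TLCB}(m)$: $(R',\_)\leftarrow\mathrm{TLCR}(m)$; $(R'',\_)\leftarrow\mathrm{TLCR}(R')$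 (so $R''$ is a set of message-sets); $R\leftarrow R'\cup\bigcup_{X\in R''}X$; $B\leftarrow\{m'\mid$ at least $t_s$ of the message-sets in $R''$ contain $m'\}$; return $(R,B)$. Thus each TLCB step uses two TLCR steps. Threshold synchronous broadcast. A primitive, called once per logical time-step by each non-failed node with a message $m$ and returning a pair $(R,B)$ of message sets, provides $\mathrm{TSB}(t_r,t_b,t_s)$ if: (lock-step synchrony) a call at step $s$ returns (completing step $s$) unless the node fails first; (receive threshold) if node $i$'s call at step $s$ returns $(R,B)$, there is $N_R\subseteq\{1,\dots,n\}$ with $|N_R|\ge t_r$ such that $R$ is exactly the set of messages broadcast by the nodes of $N_R$ in step $s$; (broadcast threshold) there is $N_B\subseteq\{1,\dots,n\}$ with $|N_B|\ge t_b$ such that $B$ is exactly the set of messages broadcast by the nodes of $N_B$ in step $s$; (spread threshold) each $m'\in B$ returned to any node at step $s$ is contained in the receive sets $R$ returned in step $s$ to at least $t_s$ nodes (counting nodes that fail before completing step $s$ but would otherwise have received $m'$). *)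

theory Defs
  imports Main "HOL.Real"
begin

text \<open>Every application message broadcast by TLCB is tagged
  with its sender (as TLCR stores pairs of sender and message), so receive sets are sets of
  pairs (sender, message). Payloads of TLCR steps are either a base message (first TLCR step
  of a TLCB step) or a tagged message set (second TLCR step).\<close>

datatype 'm payload = Base 'm | MSet "(nat \<times> 'm) set"

text \<open>Network message: sender j, payload, TLCR step number s', and the sender's set R_(s'-1).\<close>
type_synonym 'm netmsg = "nat \<times> 'm payload \<times> nat \<times> (nat \<times> 'm payload) set"

datatype 'm phase = Idle | Wait1 | Wait2 "(nat \<times> 'm) set"

record 'm nstate =
  Rv      :: "nat \<Rightarrow> (nat \<times> 'm payload) set"   \<comment> \<open>R_k, 1-indexed\<close>
  len     :: nat                                 \<comment> \<open>length of the list R\<close>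
  ph      :: "'m phase"
  kstep   :: nat                                 \<comment> \<open>number of TLCB calls made\<close>
  inp     :: "nat \<Rightarrow> 'm option"                 \<comment> \<open>message of the k-th TLCB call\<close>
  out     :: "nat \<Rightarrow> ((nat \<times> 'm) set \<times> (nat \<times> 'm) set) option" \<comment> \<open>result of k-th call\<close>
  crashed :: bool

record 'm gstate =
  nd   :: "nat \<Rightarrow> 'm nstate"
  chan :: "nat \<Rightarrow> nat \<Rightarrow> 'm netmsg list"          \<comment> \<open>chan j i: FIFO queue from j to i\<close>

datatype 'm event = Call nat 'm | Recv nat nat | Complete nat | Crash nat | Skip

definition init_node :: "'m nstate" where
  "init_node = \<lparr>Rv = (\<lambda>_. {}), len = 1, ph = Idle, kstep = 0, inp = (\<lambda>_. None),
                 out = (\<lambda>_. None), crashed = False\<rparr>"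

definition init_state :: "'m gstate" where
  "init_state = \<lparr>nd = (\<lambda>_. init_node), chan = (\<lambda>_ _. [])\<rparr>"

definition tlcr_start :: "nat \<Rightarrow> nat \<Rightarrow> 'm payload \<Rightarrow> 'm gstate \<Rightarrow> 'm gstate" where
  "tlcr_start n i p g =
     (let ns = nd g i; s = Suc (len ns);
          msg = (i, p, s, Rv ns (len ns));
          ns' = ns\<lparr>len := s, Rv := (Rv ns)(s := {})\<rparr>
      in g\<lparr>nd := (nd g)(i := ns'),
           chan := (\<lambda>a b. if a = i \<and> b \<in> {1..n} then chan g a b @ [msg] else chan g a b)\<rparr>)"

definition recv_update :: "'m netmsg \<Rightarrow> 'm nstate \<Rightarrow> 'm nstate" where
  "recv_update msg ns =
     (case msg of (j, p, s', R') \<Rightarrow>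
        let s = len ns in
        if s' = s then ns\<lparr>Rv := (Rv ns)(s := Rv ns s \<union> {(j, p)})\<rparr>
        else if s < s' then ns\<lparr>Rv := (Rv ns)(s := Rv ns s \<union> R')\<rparr>
        else ns)"

definition cur_R :: "'m nstate \<Rightarrow> (nat \<times> 'm payload) set" where
  "cur_R ns = Rv ns (len ns)"

definition enabled :: "nat \<Rightarrow> nat \<Rightarrow> 'm gstate \<Rightarrow> 'm event \<Rightarrow> bool" where
  "enabled n tr g e = (case e of
      Call i m \<Rightarrow> i \<in> {1..n} \<and> \<not> crashed (nd g i) \<and> ph (nd g i) = Idle
    | Recv i j \<Rightarrow> i \<in> {1..n} \<and> j \<in> {1..n} \<and> \<not> crashed (nd g i) \<and> ph (nd g i) \<noteq> Idle
                  \<and> card (cur_R (nd g i)) < tr \<and> chan g j i \<noteq> []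
    | Complete i \<Rightarrow> i \<in> {1..n} \<and> \<not> crashed (nd g i) \<and> ph (nd g i) \<noteq> Idle
                  \<and> tr \<le> card (cur_R (nd g i))
    | Crash i \<Rightarrow> i \<in> {1..n} \<and> \<not> crashed (nd g i)
    | Skip \<Rightarrow> True)"

text \<open>Effect of an (enabled) event. A TLCB call with message m starts TLCR(m); when the first
  TLCR returns R', TLCR(R') is started; when that returns R'', TLCB returns (R,B).\<close>
definition gstep :: "nat \<Rightarrow> nat \<Rightarrow> 'm gstate \<Rightarrow> 'm event \<Rightarrow> 'm gstate" where
  "gstep n ts g e = (case e of
      Call i m \<Rightarrow>
        (let ns = nd g i; k = Suc (kstep ns);
             ns' = ns\<lparr>kstep := k, inp := (inp ns)(k := Some m), ph := Wait1\<rparr>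
         in tlcr_start n i (Base m) (g\<lparr>nd := (nd g)(i := ns')\<rparr>))
    | Recv i j \<Rightarrow>
        g\<lparr>nd := (nd g)(i := recv_update (hd (chan g j i)) (nd g i)),
          chan := (chan g)(j := (chan g j)(i := tl (chan g j i)))\<rparr>
    | Complete i \<Rightarrow>
        (let ns = nd g i; Rs = cur_R ns in
         case ph ns of
           Wait1 \<Rightarrow>
             (let R1 = {(j, m). (j, Base m) \<in> Rs}
              in tlcr_start n i (MSet R1) (g\<lparr>nd := (nd g)(i := ns\<lparr>ph := Wait2 R1\<rparr>)\<rparr>))
         | Wait2 R1 \<Rightarrow>
             (let R2 = {(j, X). (j, MSet X) \<in> Rs};
                  R = R1 \<union> (\<Union>(j, X)\<in>R2. X);
                  B = {x. ts \<le> card {(j, X). (j, X) \<in> R2 \<and> x \<in> X}}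
              in g\<lparr>nd := (nd g)(i := ns\<lparr>ph := Idle,
                                         out := (out ns)(kstep ns := Some (R, B))\<rparr>)\<rparr>)
         | Idle \<Rightarrow> g)
    | Crash i \<Rightarrow> g\<lparr>nd := (nd g)(i := (nd g i)\<lparr>crashed := True\<rparr>)\<rparr>
    | Skip \<Rightarrow> g)"

definition run :: "nat \<Rightarrow> nat \<Rightarrow> nat \<Rightarrow> (nat \<Rightarrow> 'm gstate) \<Rightarrow> (nat \<Rightarrow> 'm event) \<Rightarrow> bool" where
  "run n tr ts st ev \<longleftrightarrow> st 0 = init_state \<and>
     (\<forall>t. enabled n tr (st t) (ev t) \<and> st (Suc t) = gstep n ts (st t) (ev t))"

definition weakly_fair ::
  "nat \<Rightarrow> 'm event set \<Rightarrow> (nat \<Rightarrow> 'm gstate) \<Rightarrow> (nat \<Rightarrow> 'm event) \<Rightarrow> nat \<Rightarrow> bool" where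
  "weakly_fair tr P st ev n \<longleftrightarrow>
     (\<forall>t0. \<exists>t\<ge>t0. (\<forall>e\<in>P. \<not> enabled n tr (st t) e) \<or> ev t \<in> P)"

definition fair :: "nat \<Rightarrow> nat \<Rightarrow> (nat \<Rightarrow> 'm gstate) \<Rightarrow> (nat \<Rightarrow> 'm event) \<Rightarrow> bool" where
  "fair n tr st ev \<longleftrightarrow> (\<forall>i\<in>{1..n}.
      weakly_fair tr {Call i m | m. True} st ev n \<and>
      weakly_fair tr {Complete i} st ev n \<and>
      (\<forall>j\<in>{1..n}. weakly_fair tr {Recv i j} st ev n))"

definition failed :: "(nat \<Rightarrow> 'm gstate) \<Rightarrow> nat \<Rightarrow> bool" where
  "failed st i \<longleftrightarrow> (\<exists>t. crashed (nd (st t) i))"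

definition bcast :: "(nat \<Rightarrow> 'm gstate) \<Rightarrow> nat \<Rightarrow> nat \<Rightarrow> 'm \<Rightarrow> bool" where
  "bcast st j s m \<longleftrightarrow> (\<exists>t. inp (nd (st t) j) s = Some m)"

definition called :: "(nat \<Rightarrow> 'm gstate) \<Rightarrow> nat \<Rightarrow> nat \<Rightarrow> bool" where
  "called st j s \<longleftrightarrow> (\<exists>m. bcast st j s m)"

definition msgs_of :: "(nat \<Rightarrow> 'm gstate) \<Rightarrow> nat set \<Rightarrow> nat \<Rightarrow> (nat \<times> 'm) set" where
  "msgs_of st N s = {(j, m). j \<in> N \<and> bcast st j s m}"

definition returns ::
  "(nat \<Rightarrow> 'm gstate) \<Rightarrow> nat \<Rightarrow> nat \<Rightarrow> (nat \<times> 'm) set \<Rightarrow> (nat \<times> 'm) set \<Rightarrow> bool" where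
  "returns st i s R B \<longleftrightarrow> (\<exists>t. out (nd (st t) i) s = Some (R, B))"

text \<open>Node j receives (or, if it fails before completing step s, would otherwise have
  received) x in step s: in every execution that coincides with the given one as long as j
  has not crashed, whenever j completes step s its receive set contains x.\<close>
definition would_receive ::
  "nat \<Rightarrow> nat \<Rightarrow> nat \<Rightarrow> (nat \<Rightarrow> 'm gstate) \<Rightarrow> nat \<Rightarrow> nat \<Rightarrow> nat \<times> 'm \<Rightarrow> bool" where
  "would_receive n tr ts st j s x \<longleftrightarrow>
     (\<forall>st' ev'. run n tr ts st' ev' \<longrightarrow>
        (\<forall>t. \<not> crashed (nd (st t) j) \<longrightarrow> st' t = st t) \<longrightarrow>
        (\<forall>R B. returns st' j s R B \<longrightarrow> x \<in> R))"

text \<open>TSB(t_r, t_b, t_s) for the execution st (step s is the s-th TLCB call, s \<ge> 1).\<close>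
definition TSB :: "nat \<Rightarrow> nat \<Rightarrow> nat \<Rightarrow> nat \<Rightarrow> (nat \<Rightarrow> 'm gstate) \<Rightarrow> bool" where
  "TSB n tr tb ts st \<longleftrightarrow>
     \<comment> \<open>lock-step synchrony\<close>
     (\<forall>i\<in>{1..n}. \<forall>s. called st i s \<longrightarrow> (\<exists>R B. returns st i s R B) \<or> failed st i) \<and>
     \<comment> \<open>receive threshold\<close>
     (\<forall>i s R B. returns st i s R B \<longrightarrow>
        (\<exists>NR\<subseteq>{1..n}. tr \<le> card NR \<and> (\<forall>j\<in>NR. called st j s) \<and> R = msgs_of st NR s)) \<and>
     \<comment> \<open>broadcast threshold\<close>
     (\<forall>i s R B. returns st i s R B \<longrightarrow>
        (\<exists>NB\<subseteq>{1..n}. tb \<le> card NB \<and> (\<forall>j\<in>NB. called st j s) \<and> B = msgs_of st NB s)) \<and>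
     \<comment> \<open>spread threshold\<close>
     (\<forall>i s R B x. returns st i s R B \<and> x \<in> B \<longrightarrow>
        (\<exists>NS\<subseteq>{1..n}. ts \<le> card NS \<and> (\<forall>j\<in>NS. would_receive n tr ts st j s x)))"

end

(* Safety rests on an invariant of the reachable states: an entry (j, p) that a node records
   for TLCR step q is exactly what j broadcast in step q, each FIFO channel holds a suffix of
   its sender's broadcasts, and every completed TLCR step holds at least t_r entries. So R
   contains the t_r messages of the first TLCR step. The reported sets of the second step are
   t_r sets of t_r messages each among the at most n messages of the TLCB step; counting their
   elements with multiplicity, where a message outside B occurs at most t_s - 1 times, gives
   t_r^2 <= t_r |B| + (n - |B|)(t_s - 1), i.e. |B| >= n - t_r (n - t_r) / (t_r - t_s + 1).
   A message of B lies in the first-step sets R' of t_s reporters, and each reporter's R' is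
   frozen into its own receive set.

   Liveness is an induction on the TLCR step L. A correct node stuck at its current step is
   never overtaken: the message of any node for the next step carries that node's complete
   set for the current one, which would unblock it. So if a correct node never passed step L,
   no node would, and the correct node reaching step L first would block there although it
   receives the step-L messages of all of the at least t_r correct nodes. *)

theory Submission
  imports Defs
begin

lemma bounded_mono_eventually_const:
  fixes f :: "nat \<Rightarrow> nat"
  assumes "mono f" and bd: "\<And>t. f t \<le> K"
  shows "\<exists>T. \<forall>t\<ge>T. f t = f T"
proof -
  have "range f \<subseteq> {..K}" using bd by auto
  then have fin: "finite (range f)" by (rule finite_subset) simp
  have "Max (range f) \<in> range f" by (rule Max_in[OF fin]) simp
  then obtain T where T: "f T = Max (range f)" by (metis rangeE)
  have "f t = f T" if "T \<le> t" for t
  proof -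
    have "f t \<le> Max (range f)" by (rule Max_ge[OF fin]) simp
    then show ?thesis using monoD[OF \<open>mono f\<close> that] T by linarith
  qed
  then show ?thesis by blast
qed

lemma unbounded_if_always_increases:
  fixes f :: "nat \<Rightarrow> nat"
  assumes inc: "\<And>t1. t \<le> t1 \<Longrightarrow> \<exists>t2\<ge>t1. f t1 < f t2"
  shows "\<exists>t'\<ge>t. k \<le> f t'"
proof (induction k)
  case 0 then show ?case by blast
next
  case (Suc k)
  then obtain t1 where t1: "t \<le> t1" "k \<le> f t1" by blast
  then obtain t2 where "t1 \<le> t2" "f t1 < f t2" using inc by blast
  then show ?case using t1 by (intro exI[of _ t2]) auto
qed

lemma unit_step_crossing:
  fixes f :: "nat \<Rightarrow> nat"
  assumes unit: "\<And>t. f (Suc t) \<le> Suc (f t)" and a: "f a \<le> c" and b: "c < f b" and ab: "a \<le> b"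
  shows "\<exists>t. a \<le> t \<and> t < b \<and> f t = c \<and> f (Suc t) = Suc c"
  using ab b
proof (induction b rule: dec_induct)
  case base then show ?case using a by simp
next
  case (step m)
  show ?case
  proof (cases "f m \<le> c")
    case True
    then have "f m = c \<and> f (Suc m) = Suc c" using step.prems unit[of m] by linarith
    then show ?thesis using step.hyps by auto
  next
    case False
    then obtain t where "a \<le> t \<and> t < m \<and> f t = c \<and> f (Suc t) = Suc c" using step.IH by auto
    then show ?thesis by auto
  qed
qed

section \<open>Double counting\<close>

lemma threshold_double_count:
  fixes F :: "('k \<times> 'x set) set" and M :: "'x set"
  assumes F: "finite F" and M: "finite M" and sub: "\<forall>a\<in>F. snd a \<subseteq> M \<and> tr \<le> card (snd a)"
    and ts: "1 \<le> ts"
  defines "B \<equiv> {x. ts \<le> card {a \<in> F. x \<in> snd a}}"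
  shows "B \<subseteq> M" and "card F * tr \<le> card B * card F + (card M - card B) * (ts - 1)"
proof -
  let ?c = "\<lambda>x. card {a \<in> F. x \<in> snd a}"
  show BM: "B \<subseteq> M"
  proof
    fix x assume "x \<in> B"
    then have "{a \<in> F. x \<in> snd a} \<noteq> {}" using ts unfolding B_def by (intro notI) simp
    then show "x \<in> M" using sub by blast
  qed
  have "card F * tr \<le> (\<Sum>a\<in>F. card (snd a))"
    using sum_bounded_below[of F tr "\<lambda>a. card (snd a)"] sub by simp
  also have "\<dots> = (\<Sum>a\<in>F. card {x \<in> M. x \<in> snd a})"
  proof (rule sum.cong[OF refl])
    fix a assume "a \<in> F"
    then have "{x \<in> M. x \<in> snd a} = snd a" using sub by blast
    then show "card (snd a) = card {x \<in> M. x \<in> snd a}" by simp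
  qed
  also have "\<dots> = (\<Sum>x\<in>M. ?c x)" by (rule sum_multicount_gen[OF F M]) simp
  also have "\<dots> = (\<Sum>x\<in>B. ?c x) + (\<Sum>x\<in>M - B. ?c x)"
    using sum.subset_diff[OF BM M, of ?c] by simp
  also have "\<dots> \<le> (\<Sum>x\<in>B. card F) + (\<Sum>x\<in>M - B. ts - 1)"
  proof (rule add_mono)
    show "(\<Sum>x\<in>B. ?c x) \<le> (\<Sum>x\<in>B. card F)" by (rule sum_mono) (rule card_mono[OF F], auto)
    show "(\<Sum>x\<in>M - B. ?c x) \<le> (\<Sum>x\<in>M - B. ts - 1)" by (rule sum_mono) (auto simp: B_def)
  qed
  also have "\<dots> = card B * card F + (card M - card B) * (ts - 1)"
    using card_Diff_subset[OF finite_subset[OF BM M] BM] by simp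
  finally show "card F * tr \<le> card B * card F + (card M - card B) * (ts - 1)" .
qed

lemma spread_bound_arith:
  fixes r b n tr u :: real
  assumes h: "r * tr \<le> b * r + (n - b) * u"
    and "0 \<le> b" "b \<le> n" "tr \<le> r" "0 \<le> u" "u + 1 \<le> tr"
  shows "n - tr * (n - tr) / (tr - u) \<le> b"
proof -
  have d: "0 < tr - u" using assms by simp
  have key: "tr * tr - n * u \<le> b * (tr - u)"
  proof (cases "tr \<le> b")
    case True
    have "tr * (tr - u) \<le> b * (tr - u)" using True d by (simp add: mult_right_mono)
    moreover have "tr * u \<le> n * u" using True assms by (simp add: mult_right_mono)
    ultimately show ?thesis by (simp add: algebra_simps)
  next
    case False
    have "tr * (tr - b) \<le> r * (tr - b)" using False assms by (simp add: mult_right_mono)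
    also have "r * (tr - b) \<le> (n - b) * u" using h by (simp add: algebra_simps)
    finally show ?thesis by (simp add: algebra_simps)
  qed
  have "n - tr * (n - tr) / (tr - u) = (tr * tr - n * u) / (tr - u)"
    using d by (simp add: field_simps)
  also have "\<dots> \<le> b" using key d by (simp add: divide_le_eq)
  finally show ?thesis .
qed

lemma threshold_card_lower_bound:
  fixes F :: "('k \<times> 'x set) set" and M :: "'x set"
  assumes F: "finite F" and M: "finite M" and sub: "\<forall>a\<in>F. snd a \<subseteq> M \<and> tr \<le> card (snd a)"
    and ts: "1 \<le> ts" "ts \<le> tr" and Fc: "tr \<le> card F" and Mc: "card M \<le> n"
  shows "real n - real tr * (real n - real tr) / (real tr - real ts + 1)
    \<le> real (card {x. ts \<le> card {a \<in> F. x \<in> snd a}})"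
proof -
  define B where "B = {x. ts \<le> card {a \<in> F. x \<in> snd a}}"
  have BM: "B \<subseteq> M" and h: "card F * tr \<le> card B * card F + (card M - card B) * (ts - 1)"
    using threshold_double_count[OF F M sub ts(1)] unfolding B_def by blast+
  have bm: "card B \<le> card M" using card_mono[OF M BM] .
  have "real (card F * tr) \<le> real (card B * card F + (card M - card B) * (ts - 1))"
    using h by (rule of_nat_mono)
  then have "real (card F) * real tr
      \<le> real (card B) * real (card F) + (real (card M) - real (card B)) * (real ts - 1)"
    using bm ts by (simp add: of_nat_diff)
  also have "\<dots> \<le> real (card B) * real (card F) + (real n - real (card B)) * (real ts - 1)"
    using Mc ts by (intro add_left_mono mult_right_mono) auto
  finally have "real n - real tr * (real n - real tr) / (real tr - (real ts - 1)) \<le> real (card B)"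
    by (rule spread_bound_arith) (use bm Mc ts Fc in auto)
  then show ?thesis unfolding B_def by (simp add: algebra_simps)
qed

declare upt_Suc[simp del]

definition base_part :: "(nat \<times> 'm payload) set \<Rightarrow> (nat \<times> 'm) set" where
  "base_part Rs = {(j, m). (j, Base m) \<in> Rs}"

definition set_part :: "(nat \<times> 'm payload) set \<Rightarrow> (nat \<times> (nat \<times> 'm) set) set" where
  "set_part Rs = {(j, X). (j, MSet X) \<in> Rs}"

definition tlcb_R :: "(nat \<times> 'm payload) set \<Rightarrow> (nat \<times> 'm payload) set \<Rightarrow> (nat \<times> 'm) set" where
  "tlcb_R A C = base_part A \<union> (\<Union>(j, X)\<in>set_part C. X)"

definition tlcb_B :: "nat \<Rightarrow> (nat \<times> 'm payload) set \<Rightarrow> (nat \<times> 'm) set" where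
  "tlcb_B ts C = {x. ts \<le> card {(j, X). (j, X) \<in> set_part C \<and> x \<in> X}}"

text \<open>TLCB step s of a node consists of its TLCR steps 2s and 2s+1 (TLCR step 1 is the
  initial empty entry of the list R).\<close>

definition sent_payload :: "'m nstate \<Rightarrow> nat \<Rightarrow> 'm payload" where
  "sent_payload ns q =
     (if even q then Base (the (inp ns (q div 2))) else MSet (base_part (Rv ns (q - 1))))"

definition sent_msg :: "nat \<Rightarrow> 'm nstate \<Rightarrow> nat \<Rightarrow> 'm netmsg" where
  "sent_msg j ns q = (j, sent_payload ns q, q, Rv ns (q - 1))"

definition node_inv :: "nat \<Rightarrow> nat \<Rightarrow> 'm nstate \<Rightarrow> bool" where
  "node_inv tr ts ns \<longleftrightarrow>
   ((ph ns = Idle \<and> len ns = 2 * kstep ns + 1) \<or>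
    (ph ns = Wait1 \<and> len ns = 2 * kstep ns \<and> 1 \<le> kstep ns) \<or>
    (ph ns = Wait2 (base_part (Rv ns (2 * kstep ns))) \<and> len ns = 2 * kstep ns + 1 \<and> 1 \<le> kstep ns)) \<and>
   (\<forall>c. (inp ns c \<noteq> None) = (1 \<le> c \<and> c \<le> kstep ns)) \<and>
   (\<forall>c. (out ns c \<noteq> None) = (1 \<le> c \<and> (c < kstep ns \<or> (c = kstep ns \<and> ph ns = Idle)))) \<and>
   (\<forall>c R B. out ns c = Some (R, B) \<longrightarrow>
      R = tlcb_R (Rv ns (2 * c)) (Rv ns (2 * c + 1)) \<and> B = tlcb_B ts (Rv ns (2 * c + 1))) \<and>
   (\<forall>q. (q \<le> 1 \<or> len ns < q) \<longrightarrow> Rv ns q = {}) \<and>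
   (\<forall>q. 2 \<le> q \<and> (q < len ns \<or> (q = len ns \<and> ph ns = Idle)) \<longrightarrow> tr \<le> card (Rv ns q))"

lemma node_invD:
  assumes "node_inv tr ts ns"
  shows "(ph ns = Idle \<and> len ns = 2 * kstep ns + 1) \<or>
      (ph ns = Wait1 \<and> len ns = 2 * kstep ns \<and> 1 \<le> kstep ns) \<or>
      (ph ns = Wait2 (base_part (Rv ns (2 * kstep ns))) \<and> len ns = 2 * kstep ns + 1 \<and> 1 \<le> kstep ns)"
    and "\<And>c. (inp ns c \<noteq> None) = (1 \<le> c \<and> c \<le> kstep ns)"
    and "\<And>c. (out ns c \<noteq> None) = (1 \<le> c \<and> (c < kstep ns \<or> (c = kstep ns \<and> ph ns = Idle)))"
    and "\<And>c R B. out ns c = Some (R, B) \<Longrightarrow>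
      R = tlcb_R (Rv ns (2 * c)) (Rv ns (2 * c + 1)) \<and> B = tlcb_B ts (Rv ns (2 * c + 1))"
    and "\<And>q. q \<le> 1 \<or> len ns < q \<Longrightarrow> Rv ns q = {}"
    and "\<And>q. 2 \<le> q \<Longrightarrow> q < len ns \<or> (q = len ns \<and> ph ns = Idle) \<Longrightarrow> tr \<le> card (Rv ns q)"
  using assms unfolding node_inv_def by (simp_all, metis)

lemma node_invI:
  assumes "(ph ns = Idle \<and> len ns = 2 * kstep ns + 1) \<or>
      (ph ns = Wait1 \<and> len ns = 2 * kstep ns \<and> 1 \<le> kstep ns) \<or>
      (ph ns = Wait2 (base_part (Rv ns (2 * kstep ns))) \<and> len ns = 2 * kstep ns + 1 \<and> 1 \<le> kstep ns)"
    and "\<And>c. (inp ns c \<noteq> None) = (1 \<le> c \<and> c \<le> kstep ns)"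
    and "\<And>c. (out ns c \<noteq> None) = (1 \<le> c \<and> (c < kstep ns \<or> (c = kstep ns \<and> ph ns = Idle)))"
    and "\<And>c R B. out ns c = Some (R, B) \<Longrightarrow>
      R = tlcb_R (Rv ns (2 * c)) (Rv ns (2 * c + 1)) \<and> B = tlcb_B ts (Rv ns (2 * c + 1))"
    and "\<And>q. q \<le> 1 \<or> len ns < q \<Longrightarrow> Rv ns q = {}"
    and "\<And>q. 2 \<le> q \<Longrightarrow> q < len ns \<or> (q = len ns \<and> ph ns = Idle) \<Longrightarrow> tr \<le> card (Rv ns q)"
  shows "node_inv tr ts ns"
  unfolding node_inv_def using assms by simp

lemma node_inv_len:
  "node_inv tr ts ns \<Longrightarrow> 2 * kstep ns \<le> len ns \<and> len ns \<le> 2 * kstep ns + 1 \<and> 1 \<le> len ns"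
  using node_invD(1)[of tr ts ns] by auto

lemma node_inv_busy: "node_inv tr ts ns \<Longrightarrow> ph ns \<noteq> Idle \<Longrightarrow> 2 \<le> len ns"
  using node_invD(1)[of tr ts ns] by auto

lemma node_inv_out_len:
  assumes "node_inv tr ts ns" and "out ns s = Some v"
  shows "1 \<le> s \<and> 2 * s + 1 \<le> len ns \<and> (2 * s + 1 < len ns \<or> ph ns = Idle)"
  using node_invD(1)[OF assms(1)] node_invD(3)[OF assms(1), of s] assms(2) by auto

lemma nd_Call: "nd (gstep n ts g (Call i m)) k = (if k = i then (nd g i)\<lparr>kstep := Suc (kstep (nd g i)),
    inp := (inp (nd g i))(Suc (kstep (nd g i)) := Some m), ph := Wait1,
    len := Suc (len (nd g i)), Rv := (Rv (nd g i))(Suc (len (nd g i)) := {})\<rparr> else nd g k)"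
  by (simp add: gstep_def tlcr_start_def Let_def)

lemma chan_Call: "chan (gstep n ts g (Call i m)) a b = (if a = i \<and> b \<in> {1..n}
    then chan g a b @ [(i, Base m, Suc (len (nd g i)), Rv (nd g i) (len (nd g i)))] else chan g a b)"
  by (simp add: gstep_def tlcr_start_def Let_def)

lemma nd_Recv: "nd (gstep n ts g (Recv i j)) k =
    (if k = i then recv_update (hd (chan g j i)) (nd g i) else nd g k)"
  by (simp add: gstep_def)

lemma chan_Recv: "chan (gstep n ts g (Recv i j)) a b =
    (if a = j \<and> b = i then tl (chan g j i) else chan g a b)"
  by (simp add: gstep_def)

lemma nd_Complete1: "ph (nd g i) = Wait1 \<Longrightarrow> nd (gstep n ts g (Complete i)) k = (if k = i
    then (nd g i)\<lparr>ph := Wait2 (base_part (cur_R (nd g i))), len := Suc (len (nd g i)),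
      Rv := (Rv (nd g i))(Suc (len (nd g i)) := {})\<rparr> else nd g k)"
  by (simp add: gstep_def tlcr_start_def Let_def base_part_def)

lemma chan_Complete1: "ph (nd g i) = Wait1 \<Longrightarrow> chan (gstep n ts g (Complete i)) a b =
    (if a = i \<and> b \<in> {1..n} then chan g a b @ [(i, MSet (base_part (cur_R (nd g i))),
      Suc (len (nd g i)), Rv (nd g i) (len (nd g i)))] else chan g a b)"
  by (simp add: gstep_def tlcr_start_def Let_def base_part_def)

lemma nd_Complete2: "ph (nd g i) = Wait2 X \<Longrightarrow> nd (gstep n ts g (Complete i)) k = (if k = i
    then (nd g i)\<lparr>ph := Idle, out := (out (nd g i))(kstep (nd g i) :=
      Some (X \<union> (\<Union>(j, Y)\<in>set_part (cur_R (nd g i)). Y), tlcb_B ts (cur_R (nd g i))))\<rparr>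
    else nd g k)"
  by (simp add: gstep_def Let_def set_part_def tlcb_B_def)

lemma chan_Complete2: "ph (nd g i) = Wait2 X \<Longrightarrow> chan (gstep n ts g (Complete i)) = chan g"
  by (simp add: gstep_def Let_def)

lemma nd_Crash: "nd (gstep n ts g (Crash i)) k = (if k = i then (nd g i)\<lparr>crashed := True\<rparr> else nd g k)"
  by (simp add: gstep_def)

lemma chan_Crash: "chan (gstep n ts g (Crash i)) = chan g"
  by (simp add: gstep_def)

lemma recv_update_simps[simp]:
  "len (recv_update x ns) = len ns" "kstep (recv_update x ns) = kstep ns"
  "ph (recv_update x ns) = ph ns" "inp (recv_update x ns) = inp ns"
  "out (recv_update x ns) = out ns" "crashed (recv_update x ns) = crashed ns"
  by (cases x; auto simp: recv_update_def Let_def)+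

lemma len_Recv: "len (nd (gstep n ts g (Recv i j)) k) = len (nd g k)"
  by (simp add: nd_Recv)

lemma Rv_recv_update: "Rv (recv_update (j, p, s', R') ns) q =
   (if q = len ns \<and> s' = len ns then Rv ns q \<union> {(j, p)}
    else if q = len ns \<and> len ns < s' then Rv ns q \<union> R' else Rv ns q)"
  by (auto simp: recv_update_def Let_def)

lemma Rv_recv_update_other: "q \<noteq> len ns \<Longrightarrow> Rv (recv_update x ns) q = Rv ns q"
  by (cases x) (auto simp: Rv_recv_update)

lemma Rv_recv_update_mono: "Rv ns q \<subseteq> Rv (recv_update x ns) q"
  by (cases x) (auto simp: Rv_recv_update)

lemma Rv_gstep_subset:
  assumes "\<forall>j. e \<noteq> Recv i j"
  shows "Rv (nd (gstep n ts g e) i) q \<subseteq> Rv (nd g i) q"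
proof (cases e)
  case (Complete a)
  then show ?thesis by (cases "ph (nd g a)") (auto simp: nd_Complete1 nd_Complete2, simp add: gstep_def)
qed (use assms in \<open>auto simp: nd_Call nd_Recv nd_Crash, simp add: gstep_def\<close>)

lemma len_gstep_crashed:
  assumes "enabled n tr g e" and "crashed (nd (gstep n ts g e) j)"
  shows "len (nd (gstep n ts g e) j) = len (nd g j)"
proof (cases e)
  case (Complete a)
  then show ?thesis using assms
    by (cases "ph (nd g a)") (auto simp: nd_Complete1 nd_Complete2 enabled_def split: if_splits)
qed (use assms in \<open>auto simp: nd_Call nd_Recv nd_Crash enabled_def split: if_splits,
    simp add: gstep_def\<close>)

lemma node_inv_Call:
  assumes I: "node_inv tr ts ns" and idle: "ph ns = Idle"
  shows "node_inv tr ts (ns\<lparr>kstep := Suc (kstep ns), inp := (inp ns)(Suc (kstep ns) := Some m),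
    ph := Wait1, len := Suc (len ns), Rv := (Rv ns)(Suc (len ns) := {})\<rparr>)"
proof -
  have L: "len ns = 2 * kstep ns + 1" using node_invD(1)[OF I] idle by auto
  show ?thesis
  proof (rule node_invI, goal_cases)
    case 1 then show ?case using L by simp
  next
    case (2 c) then show ?case using node_invD(2)[OF I, of c] by auto
  next
    case (3 c) then show ?case using node_invD(3)[OF I, of c] idle by auto
  next
    case (4 c R B)
    then have "out ns c = Some (R, B)" by simp
    moreover from this have "c \<le> kstep ns" using node_invD(3)[OF I, of c] by auto
    ultimately show ?case using node_invD(4)[OF I, of c R B] L by simp
  next
    case (5 q) then show ?case using node_invD(5)[OF I, of q] by auto
  next
    case (6 q) then show ?case using node_invD(6)[OF I, of q] idle by (auto simp: less_Suc_eq)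
  qed
qed

lemma node_inv_recv_update:
  assumes I: "node_inv tr ts ns" and busy: "ph ns \<noteq> Idle"
  shows "node_inv tr ts (recv_update x ns)"
proof -
  have L: "2 * kstep ns \<le> len ns" "2 \<le> len ns" using node_invD(1)[OF I] busy by auto
  show ?thesis
  proof (rule node_invI, goal_cases)
    case 1 then show ?case using node_invD(1)[OF I] busy L by (auto simp: Rv_recv_update_other)
  next
    case (2 c) then show ?case using node_invD(2)[OF I, of c] by auto
  next
    case (3 c) then show ?case using node_invD(3)[OF I, of c] by auto
  next
    case (4 c R B)
    then have "out ns c = Some (R, B)" by simp
    moreover from this have "c < kstep ns" using node_invD(3)[OF I, of c] busy by auto
    ultimately show ?case using node_invD(4)[OF I, of c R B] L by (simp add: Rv_recv_update_other)
  next
    case (5 q)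
    with L have "q \<noteq> len ns" by auto
    then show ?case using 5 node_invD(5)[OF I, of q] by (simp add: Rv_recv_update_other)
  next
    case (6 q) then show ?case using node_invD(6)[OF I, of q] busy by (auto simp: Rv_recv_update_other)
  qed
qed

lemma node_inv_Complete1:
  assumes I: "node_inv tr ts ns" and w: "ph ns = Wait1" and c: "tr \<le> card (cur_R ns)"
  shows "node_inv tr ts (ns\<lparr>ph := Wait2 (base_part (cur_R ns)), len := Suc (len ns),
    Rv := (Rv ns)(Suc (len ns) := {})\<rparr>)"
proof -
  have L: "len ns = 2 * kstep ns" "1 \<le> kstep ns" using node_invD(1)[OF I] w by auto
  show ?thesis
  proof (rule node_invI, goal_cases)
    case 1 then show ?case using L by (simp add: cur_R_def)
  next
    case (2 c) then show ?case using node_invD(2)[OF I, of c] by auto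
  next
    case (3 c) then show ?case using node_invD(3)[OF I, of c] w by auto
  next
    case (4 c R B)
    then have "out ns c = Some (R, B)" by simp
    moreover from this have "c < kstep ns" using node_invD(3)[OF I, of c] w by auto
    ultimately show ?case using node_invD(4)[OF I, of c R B] L by simp
  next
    case (5 q) then show ?case using node_invD(5)[OF I, of q] by auto
  next
    case (6 q) then show ?case using node_invD(6)[OF I, of q] c w by (auto simp: less_Suc_eq cur_R_def)
  qed
qed

lemma node_inv_Complete2:
  assumes I: "node_inv tr ts ns" and w: "ph ns = Wait2 X" and c: "tr \<le> card (cur_R ns)"
  shows "node_inv tr ts (ns\<lparr>ph := Idle, out := (out ns)(kstep ns :=
    Some (X \<union> (\<Union>(j, Y)\<in>set_part (cur_R ns). Y), tlcb_B ts (cur_R ns)))\<rparr>)"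
proof -
  have L: "len ns = 2 * kstep ns + 1" "1 \<le> kstep ns" "X = base_part (Rv ns (2 * kstep ns))"
    using node_invD(1)[OF I] w by auto
  show ?thesis
  proof (rule node_invI, goal_cases)
    case 1 then show ?case using L by simp
  next
    case (2 c) then show ?case using node_invD(2)[OF I, of c] by auto
  next
    case (3 c) then show ?case using node_invD(3)[OF I, of c] w L by auto
  next
    case (4 c R B)
    show ?case
    proof (cases "c = kstep ns")
      case True then show ?thesis using 4 L by (auto simp: tlcb_R_def cur_R_def)
    next
      case False then show ?thesis using 4 node_invD(4)[OF I, of c R B] by simp
    qed
  next
    case (5 q) then show ?case using node_invD(5)[OF I, of q] by auto
  next
    case (6 q) then show ?case using node_invD(6)[OF I, of q] c w by (auto simp: cur_R_def)
  qed
qed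

lemma node_inv_gstep:
  assumes inv: "\<forall>k. node_inv tr ts (nd g k)" and en: "enabled n tr g e"
  shows "node_inv tr ts (nd (gstep n ts g e) k)"
proof (cases e)
  case (Call i m)
  then show ?thesis using inv en node_inv_Call[of tr ts "nd g i" m] by (auto simp: nd_Call enabled_def)
next
  case (Recv i j)
  then show ?thesis using inv en node_inv_recv_update[of tr ts "nd g i"] by (auto simp: nd_Recv enabled_def)
next
  case (Complete i)
  show ?thesis
  proof (cases "ph (nd g i)")
    case Idle then show ?thesis using en Complete by (simp add: enabled_def)
  next
    case Wait1 then show ?thesis using inv en Complete node_inv_Complete1[of tr ts "nd g i"]
      by (auto simp: nd_Complete1 enabled_def)
  next
    case (Wait2 X) then show ?thesis using inv en Complete node_inv_Complete2[of tr ts "nd g i" X]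
      by (auto simp: nd_Complete2 enabled_def)
  qed
next
  case (Crash i)
  have "node_inv tr ts ((nd g i)\<lparr>crashed := True\<rparr>)" using inv unfolding node_inv_def by simp
  then show ?thesis using inv Crash by (auto simp: nd_Crash)
next
  case Skip
  then show ?thesis using inv by (simp add: gstep_def)
qed

definition node_extends :: "'m nstate \<Rightarrow> 'm nstate \<Rightarrow> bool" where
  "node_extends a b \<longleftrightarrow> len a \<le> len b \<and> kstep a \<le> kstep b \<and> (\<forall>q < len a. Rv b q = Rv a q) \<and>
     (\<forall>q. Rv a q \<subseteq> Rv b q) \<and> (\<forall>c \<le> kstep a. inp b c = inp a c) \<and> (crashed a \<longrightarrow> crashed b)"

lemma node_extends_refl: "node_extends a a"
  by (simp add: node_extends_def)

lemma node_extends_trans: "node_extends a b \<Longrightarrow> node_extends b c \<Longrightarrow> node_extends a c"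
  unfolding node_extends_def by (metis order_trans less_le_trans subset_trans)

lemma node_extends_gstep:
  assumes inv: "\<forall>k. node_inv tr ts (nd g k)" and en: "enabled n tr g e"
  shows "node_extends (nd g k) (nd (gstep n ts g e) k)"
proof -
  have fresh: "Rv (nd g i) (Suc (len (nd g i))) = {}" for i
    using node_invD(5)[of tr ts "nd g i"] inv by auto
  show ?thesis
  proof (cases e)
    case (Call i m)
    then show ?thesis using fresh[of i] by (auto simp: nd_Call node_extends_def)
  next
    case (Recv i j)
    then show ?thesis
      by (auto simp: nd_Recv node_extends_def Rv_recv_update_other Rv_recv_update_mono)
  next
    case (Complete i)
    show ?thesis
    proof (cases "ph (nd g i)")
      case Idle then show ?thesis using en Complete by (simp add: enabled_def)
    next
      case Wait1 then show ?thesis using Complete fresh[of i] by (auto simp: nd_Complete1 node_extends_def)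
    next
      case (Wait2 X) then show ?thesis using Complete by (auto simp: nd_Complete2 node_extends_def)
    qed
  next
    case (Crash i)
    then show ?thesis by (auto simp: nd_Crash node_extends_def)
  next
    case Skip
    then show ?thesis by (simp add: gstep_def node_extends_refl)
  qed
qed

lemma sent_msg_extends:
  assumes "node_inv tr ts a" "node_extends a b" "q \<le> len a"
  shows "sent_payload b q = sent_payload a q" and "sent_msg j b q = sent_msg j a q"
proof -
  have "q - 1 < len a" and "even q \<Longrightarrow> q div 2 \<le> kstep a"
    using assms(3) node_inv_len[OF assms(1)] by auto
  then show "sent_payload b q = sent_payload a q"
    using assms(2) unfolding node_extends_def sent_payload_def by auto
  with \<open>q - 1 < len a\<close> show "sent_msg j b q = sent_msg j a q"
    using assms(2) unfolding node_extends_def sent_msg_def by auto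
qed

lemma map_sent_msg_extends:
  assumes "node_inv tr ts a" "node_extends a b"
  shows "map (sent_msg j b) [x..<Suc (len a)] = map (sent_msg j a) [x..<Suc (len a)]"
  using sent_msg_extends(2)[OF assms] by simp

subsection \<open>The global invariant\<close>

definition entries_sent :: "nat \<Rightarrow> 'm gstate \<Rightarrow> bool" where
  "entries_sent n g \<longleftrightarrow> (\<forall>i q k p. (k, p) \<in> Rv (nd g i) q \<longrightarrow>
     k \<in> {1..n} \<and> q \<le> len (nd g k) \<and> p = sent_payload (nd g k) q)"

definition delivery_ok :: "nat \<Rightarrow> nat \<Rightarrow> 'm nstate \<Rightarrow> bool" where
  "delivery_ok tr p ns \<longleftrightarrow> p \<le> len ns \<or> (p = Suc (len ns) \<and> tr \<le> card (cur_R ns))"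

text \<open>The messages of the TLCR steps 2..p of j have been delivered to i (step 1 sends
  nothing), and the channel holds those of the steps p+1..len j. A receiver only gets ahead of
  its current step after completing it.\<close>

definition chan_ok :: "nat \<Rightarrow> 'm gstate \<Rightarrow> nat \<Rightarrow> nat \<Rightarrow> bool" where
  "chan_ok tr g j i \<longleftrightarrow> (\<exists>p. 1 \<le> p \<and> p \<le> len (nd g j) \<and>
     chan g j i = map (sent_msg j (nd g j)) [Suc p..<Suc (len (nd g j))] \<and> delivery_ok tr p (nd g i))"

definition reach_inv :: "nat \<Rightarrow> nat \<Rightarrow> nat \<Rightarrow> 'm gstate \<Rightarrow> bool" where
  "reach_inv n tr ts g \<longleftrightarrow> (\<forall>i. node_inv tr ts (nd g i)) \<and> entries_sent n g \<and>
     (\<forall>i\<in>{1..n}. \<forall>j\<in>{1..n}. chan_ok tr g j i)"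

definition delivered :: "'m gstate \<Rightarrow> nat \<Rightarrow> nat \<Rightarrow> nat" where
  "delivered g j i = len (nd g j) - length (chan g j i)"

lemma entries_sent_finite:
  assumes "entries_sent n g"
  shows "finite (Rv (nd g i) q)"
proof (rule finite_subset)
  show "Rv (nd g i) q \<subseteq> (\<lambda>k. (k, sent_payload (nd g k) q)) ` {1..n}"
    using assms unfolding entries_sent_def by fastforce
qed simp

lemma entries_sent_unique:
  "entries_sent n g \<Longrightarrow> (k, p) \<in> Rv (nd g i) q \<Longrightarrow> (k, p') \<in> Rv (nd g i') q \<Longrightarrow> p = p'"
  unfolding entries_sent_def by blast

lemma entries_sent_card_fst:
  assumes "entries_sent n g"
  shows "card (fst ` Rv (nd g i) q) = card (Rv (nd g i) q)"
proof (rule card_image)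
  show "inj_on fst (Rv (nd g i) q)"
    using entries_sent_unique[OF assms] by (fastforce simp: inj_on_def)
qed

lemma delivery_ok_extends:
  assumes "delivery_ok tr p a" "node_extends a b" "finite (cur_R b)"
  shows "delivery_ok tr p b"
proof (cases "len b = len a")
  case True
  then have "cur_R a \<subseteq> cur_R b" using assms(2) by (simp add: node_extends_def cur_R_def)
  then have "card (cur_R a) \<le> card (cur_R b)" using assms(3) by (rule card_mono[rotated])
  then show ?thesis using assms(1) True by (auto simp: delivery_ok_def)
next
  case False
  then show ?thesis using assms(1,2) by (auto simp: delivery_ok_def node_extends_def)
qed

lemma chan_ok_delivered:
  assumes "chan_ok tr g j i"
  shows "1 \<le> delivered g j i" "delivered g j i \<le> len (nd g j)"
    "chan g j i = map (sent_msg j (nd g j)) [Suc (delivered g j i)..<Suc (len (nd g j))]"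
    "delivery_ok tr (delivered g j i) (nd g i)"
proof -
  obtain p where p: "1 \<le> p" "p \<le> len (nd g j)"
    "chan g j i = map (sent_msg j (nd g j)) [Suc p..<Suc (len (nd g j))]" "delivery_ok tr p (nd g i)"
    using assms unfolding chan_ok_def by blast
  moreover have "delivered g j i = p" using p(2,3) by (simp add: delivered_def)
  ultimately show "1 \<le> delivered g j i" "delivered g j i \<le> len (nd g j)"
    "chan g j i = map (sent_msg j (nd g j)) [Suc (delivered g j i)..<Suc (len (nd g j))]"
    "delivery_ok tr (delivered g j i) (nd g i)" by simp_all
qed

lemma chan_ok_Recv_head:
  assumes C: "chan_ok tr g j i" and en: "enabled n tr g (Recv i j)"
  obtains p where "p < len (nd g j)" "p \<le> len (nd g i)"
    "hd (chan g j i) = sent_msg j (nd g j) (Suc p)"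
    "tl (chan g j i) = map (sent_msg j (nd g j)) [Suc (Suc p)..<Suc (len (nd g j))]"
proof -
  obtain p where p: "p \<le> len (nd g j)"
    "chan g j i = map (sent_msg j (nd g j)) [Suc p..<Suc (len (nd g j))]" "delivery_ok tr p (nd g i)"
    using C unfolding chan_ok_def by blast
  have "chan g j i \<noteq> []" and "card (cur_R (nd g i)) < tr" using en by (auto simp: enabled_def)
  then have "p \<le> len (nd g i)" and "p < len (nd g j)" using p by (auto simp: delivery_ok_def)
  moreover from \<open>p < len (nd g j)\<close>
  have "[Suc p..<Suc (len (nd g j))] = Suc p # [Suc (Suc p)..<Suc (len (nd g j))]"
    by (simp add: upt_conv_Cons)
  ultimately show ?thesis using that p(2) by simp
qed

lemma Rv_Recv_new_entry:
  assumes C: "chan_ok tr g j i" and en: "enabled n tr g (Recv i j)"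
    and new: "(k, p) \<in> Rv (nd (gstep n ts g (Recv i j)) i) q" "(k, p) \<notin> Rv (nd g i) q"
  shows "(k = j \<and> q \<le> len (nd g j) \<and> p = sent_payload (nd g j) q) \<or> (k, p) \<in> Rv (nd g j) q"
proof -
  obtain p0 where p0: "p0 < len (nd g j)" "p0 \<le> len (nd g i)"
    "hd (chan g j i) = sent_msg j (nd g j) (Suc p0)"
    using chan_ok_Recv_head[OF C en] by metis
  have "(k, p) \<in> Rv (recv_update (j, sent_payload (nd g j) (Suc p0), Suc p0, Rv (nd g j) p0) (nd g i)) q"
    using new(1) p0(3) by (simp add: nd_Recv sent_msg_def)
  moreover have "len (nd g i) < Suc p0 \<Longrightarrow> p0 = len (nd g i)" using p0(2) by simp
  ultimately show ?thesis using new(2) p0(1) by (auto simp: Rv_recv_update split: if_splits)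
qed

lemma entries_sent_gstep:
  assumes I: "reach_inv n tr ts g" and en: "enabled n tr g e"
  shows "entries_sent n (gstep n ts g e)"
proof -
  let ?g = "gstep n ts g e"
  have N: "\<forall>k. node_inv tr ts (nd g k)" and P: "entries_sent n g"
    using I by (auto simp: reach_inv_def)
  have E: "node_extends (nd g k) (nd ?g k)" for k using node_extends_gstep[OF N en] .
  have old: "k \<in> {1..n} \<and> q \<le> len (nd ?g k) \<and> p = sent_payload (nd ?g k) q"
    if "k \<in> {1..n}" "q \<le> len (nd g k)" "p = sent_payload (nd g k) q" for k q p
    using that sent_msg_extends(1)[OF N[rule_format] E] E[of k] by (auto simp: node_extends_def)
  show ?thesis unfolding entries_sent_def
  proof (intro allI impI)
    fix i q k p assume kp: "(k, p) \<in> Rv (nd ?g i) q"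
    show "k \<in> {1..n} \<and> q \<le> len (nd ?g k) \<and> p = sent_payload (nd ?g k) q"
    proof (cases "(k, p) \<in> Rv (nd g i) q")
      case True then show ?thesis using P old unfolding entries_sent_def by blast
    next
      case False
      then obtain j where e: "e = Recv i j" using kp Rv_gstep_subset[of e i] by blast
      then have "j \<in> {1..n}" "i \<in> {1..n}" using en by (auto simp: enabled_def)
      then have "chan_ok tr g j i" using I by (simp add: reach_inv_def)
      then show ?thesis using Rv_Recv_new_entry[of tr g j i n k p ts q] kp False en e
        P \<open>j \<in> {1..n}\<close> old unfolding entries_sent_def by blast
    qed
  qed
qed

lemma chan_gstep_cases:
  assumes N: "\<forall>k. node_inv tr ts (nd g k)" and en: "enabled n tr g e" and i: "i \<in> {1..n}"
  obtains
    (unchanged) "chan (gstep n ts g e) j i = chan g j i" "len (nd (gstep n ts g e) j) = len (nd g j)"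
  | (appended) "chan (gstep n ts g e) j i =
        chan g j i @ [sent_msg j (nd (gstep n ts g e) j) (Suc (len (nd g j)))]"
      "len (nd (gstep n ts g e) j) = Suc (len (nd g j))"
  | (received) "e = Recv i j"
proof (cases e)
  case (Call a m)
  show ?thesis
  proof (cases "j = a")
    case True
    have "len (nd g a) = 2 * kstep (nd g a) + 1"
      using node_invD(1)[OF N[rule_format, of a]] en Call by (auto simp: enabled_def)
    then show ?thesis using appended Call True i
      by (simp add: chan_Call nd_Call sent_msg_def sent_payload_def)
  qed (use unchanged Call in \<open>simp add: chan_Call nd_Call\<close>)
next
  case (Complete a)
  show ?thesis
  proof (cases "ph (nd g a)")
    case Idle then show ?thesis using en Complete by (simp add: enabled_def)
  next
    case Wait1
    show ?thesis
    proof (cases "j = a")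
      case True
      have "len (nd g a) = 2 * kstep (nd g a)" using node_invD(1)[OF N[rule_format, of a]] Wait1 by auto
      then show ?thesis using appended Complete Wait1 True i
        by (simp add: chan_Complete1 nd_Complete1 sent_msg_def sent_payload_def cur_R_def)
    qed (use unchanged Complete Wait1 in \<open>simp add: chan_Complete1 nd_Complete1\<close>)
  next
    case (Wait2 X)
    then show ?thesis using unchanged Complete by (simp add: chan_Complete2 nd_Complete2)
  qed
next
  case (Recv a b)
  show ?thesis
  proof (cases "a = i \<and> b = j")
    case False then show ?thesis using Recv by (intro unchanged) (auto simp: chan_Recv nd_Recv)
  qed (use received Recv in simp)
qed (use unchanged in \<open>simp_all add: chan_Crash nd_Crash gstep_def\<close>)

lemma chan_ok_unchanged:
  assumes "chan_ok tr g j i" and N: "node_inv tr ts (nd g j)"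
    and E: "node_extends (nd g j) (nd g' j)" "node_extends (nd g i) (nd g' i)"
    and fin: "finite (cur_R (nd g' i))"
    and ch: "chan g' j i = chan g j i" and l: "len (nd g' j) = len (nd g j)"
  shows "chan_ok tr g' j i"
proof -
  obtain p where p: "1 \<le> p" "p \<le> len (nd g j)"
    "chan g j i = map (sent_msg j (nd g j)) [Suc p..<Suc (len (nd g j))]" "delivery_ok tr p (nd g i)"
    using assms(1) unfolding chan_ok_def by blast
  have "chan g' j i = map (sent_msg j (nd g j)) [Suc p..<Suc (len (nd g j))]" using p(3) ch by simp
  also have "\<dots> = map (sent_msg j (nd g' j)) [Suc p..<Suc (len (nd g' j))]"
    by (simp only: l map_sent_msg_extends[OF N E(1)])
  finally show ?thesis
    unfolding chan_ok_def using p(1,2) l delivery_ok_extends[OF p(4) E(2) fin] by auto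
qed

lemma chan_ok_appended:
  assumes "chan_ok tr g j i" and N: "node_inv tr ts (nd g j)"
    and E: "node_extends (nd g j) (nd g' j)" "node_extends (nd g i) (nd g' i)"
    and fin: "finite (cur_R (nd g' i))"
    and ch: "chan g' j i = chan g j i @ [sent_msg j (nd g' j) (Suc (len (nd g j)))]"
    and l: "len (nd g' j) = Suc (len (nd g j))"
  shows "chan_ok tr g' j i"
proof -
  obtain p where p: "1 \<le> p" "p \<le> len (nd g j)"
    "chan g j i = map (sent_msg j (nd g j)) [Suc p..<Suc (len (nd g j))]" "delivery_ok tr p (nd g i)"
    using assms(1) unfolding chan_ok_def by blast
  have "chan g' j i = map (sent_msg j (nd g j)) [Suc p..<Suc (len (nd g j))]
      @ [sent_msg j (nd g' j) (Suc (len (nd g j)))]" using p(3) ch by simp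
  also have "\<dots> = map (sent_msg j (nd g' j)) [Suc p..<Suc (len (nd g j))]
      @ [sent_msg j (nd g' j) (Suc (len (nd g j)))]"
    by (simp only: map_sent_msg_extends[OF N E(1)])
  also have "\<dots> = map (sent_msg j (nd g' j)) [Suc p..<Suc (len (nd g' j))]"
    using p(2) l by (simp add: upt_Suc)
  finally show ?thesis
    unfolding chan_ok_def using p(1,2) l delivery_ok_extends[OF p(4) E(2) fin] by auto
qed

lemma chan_ok_received:
  assumes C: "chan_ok tr g j i" and en: "enabled n tr g (Recv i j)"
    and N: "\<forall>k. node_inv tr ts (nd g k)" and P': "entries_sent n (gstep n ts g (Recv i j))"
  shows "chan_ok tr (gstep n ts g (Recv i j)) j i"
proof -
  let ?g = "gstep n ts g (Recv i j)"
  obtain p where p: "p < len (nd g j)" "p \<le> len (nd g i)"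
    "hd (chan g j i) = sent_msg j (nd g j) (Suc p)"
    "tl (chan g j i) = map (sent_msg j (nd g j)) [Suc (Suc p)..<Suc (len (nd g j))]"
    using chan_ok_Recv_head[OF C en] by metis
  note l = len_Recv[of n ts g i j]
  have E: "node_extends (nd g j) (nd ?g j)" using node_extends_gstep[OF N en] .
  have "chan ?g j i = map (sent_msg j (nd g j)) [Suc (Suc p)..<Suc (len (nd g j))]"
    using p(4) by (simp add: chan_Recv)
  also have "\<dots> = map (sent_msg j (nd ?g j)) [Suc (Suc p)..<Suc (len (nd ?g j))]"
    by (simp only: l map_sent_msg_extends[OF N[rule_format] E])
  moreover have "delivery_ok tr (Suc p) (nd ?g i)"
  proof (cases "p = len (nd g i)")
    case True
    have "ph (nd g i) \<noteq> Idle" using en by (simp add: enabled_def)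
    then have "2 \<le> p" using node_inv_busy[OF N[rule_format]] True by blast
    then have "tr \<le> card (Rv (nd g j) p)" using node_invD(6)[OF N[rule_format, of j], of p] p(1) by simp
    moreover have "Rv (nd g j) p \<subseteq> cur_R (nd ?g i)"
      using p(3) True by (simp add: nd_Recv sent_msg_def Rv_recv_update cur_R_def)
    ultimately have "tr \<le> card (cur_R (nd ?g i))"
      using entries_sent_finite[OF P'] card_mono le_trans unfolding cur_R_def by metis
    then show ?thesis using True by (simp add: delivery_ok_def l)
  qed (use p(2) in \<open>simp add: delivery_ok_def l\<close>)
  ultimately show ?thesis unfolding chan_ok_def using p(1) l by (intro exI[of _ "Suc p"]) auto
qed

lemma reach_inv_gstep:
  assumes I: "reach_inv n tr ts g" and en: "enabled n tr g e"
  shows "reach_inv n tr ts (gstep n ts g e)"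
proof -
  let ?g = "gstep n ts g e"
  have N: "\<forall>k. node_inv tr ts (nd g k)" using I by (simp add: reach_inv_def)
  have P': "entries_sent n ?g" by (rule entries_sent_gstep[OF I en])
  have fin: "finite (cur_R (nd ?g i))" for i unfolding cur_R_def by (rule entries_sent_finite[OF P'])
  have E: "node_extends (nd g k) (nd ?g k)" for k by (rule node_extends_gstep[OF N en])
  have "chan_ok tr ?g j i" if ij: "i \<in> {1..n}" "j \<in> {1..n}" for i j
  proof -
    have C: "chan_ok tr g j i" using I ij by (simp add: reach_inv_def)
    show ?thesis
    proof (cases rule: chan_gstep_cases[OF N en ij(1), of j, case_names unchanged appended received])
      case unchanged then show ?thesis by (rule chan_ok_unchanged[OF C N[rule_format] E E fin])
    next
      case appended then show ?thesis by (rule chan_ok_appended[OF C N[rule_format] E E fin])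
    next
      case received then show ?thesis using chan_ok_received[OF C _ N] en P' by simp
    qed
  qed
  then show ?thesis using node_inv_gstep[OF N en] P' by (simp add: reach_inv_def)
qed

lemma reach_inv_init: "reach_inv n tr ts init_state"
proof -
  have "node_inv tr ts (nd init_state k)" for k
    by (rule node_invI) (auto simp: init_state_def init_node_def)
  moreover have "chan_ok tr init_state j i" for i j
    unfolding chan_ok_def by (intro exI[of _ 1]) (simp add: init_state_def init_node_def delivery_ok_def)
  moreover have "entries_sent n init_state" by (simp add: entries_sent_def init_state_def init_node_def)
  ultimately show ?thesis unfolding reach_inv_def by auto
qed

lemma delivered_gstep:
  assumes I: "reach_inv n tr ts g" and en: "enabled n tr g e" and ij: "i \<in> {1..n}" "j \<in> {1..n}"
  shows "delivered (gstep n ts g e) j i = delivered g j i + (if e = Recv i j then 1 else 0)"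
proof -
  have N: "\<forall>k. node_inv tr ts (nd g k)" using I by (simp add: reach_inv_def)
  have "length (chan g j i) \<le> len (nd g j)"
    using chan_ok_delivered(2,3)[of tr g j i] I ij by (simp add: reach_inv_def)
  show ?thesis
  proof (cases "e = Recv i j")
    case True
    moreover obtain x xs where "chan g j i = x # xs"
      using en True by (cases "chan g j i") (auto simp: enabled_def)
    ultimately show ?thesis using \<open>length (chan g j i) \<le> len (nd g j)\<close>
      by (auto simp: delivered_def chan_Recv nd_Recv)
  next
    case False
    then show ?thesis using \<open>length (chan g j i) \<le> len (nd g j)\<close>
      by (cases rule: chan_gstep_cases[OF N en ij(1), of j]) (auto simp: delivered_def)
  qed
qed

definition progress :: "'m nstate \<Rightarrow> nat" where
  "progress ns = 3 * kstep ns + (case ph ns of Wait1 \<Rightarrow> 0 | Wait2 _ \<Rightarrow> 1 | Idle \<Rightarrow> 2)"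

lemma progress_gstep:
  assumes "enabled n tr g e"
  shows "progress (nd (gstep n ts g e) i) =
    progress (nd g i) + (if e \<in> range (Call i) \<or> e = Complete i then 1 else 0)"
proof (cases e)
  case (Call a m)
  then show ?thesis using assms by (auto simp: nd_Call progress_def enabled_def)
next
  case (Complete a)
  show ?thesis
  proof (cases "ph (nd g a)")
    case Idle then show ?thesis using assms Complete by (simp add: enabled_def)
  next
    case Wait1 then show ?thesis using Complete by (auto simp: nd_Complete1 progress_def)
  next
    case (Wait2 X) then show ?thesis using Complete by (auto simp: nd_Complete2 progress_def)
  qed
qed (auto simp: nd_Recv nd_Crash progress_def gstep_def)

lemma progress_eq_len:
  assumes "node_inv tr ts a" "node_inv tr ts b" "progress a = progress b"
  shows "len a = len b \<and> (ph a = Idle \<longleftrightarrow> ph b = Idle)"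
  using node_invD(1)[OF assms(1)] node_invD(1)[OF assms(2)] assms(3)
  by (auto simp: progress_def; presburger)

lemma progress_le_len: "node_inv tr ts a \<Longrightarrow> progress a \<le> 3 * len a + 2"
  using node_invD(1)[of tr ts a] by (auto simp: progress_def)

lemma card_base_part:
  assumes "\<forall>x\<in>A. \<exists>k m. x = (k, Base m)"
  shows "card (base_part A) = card A"
proof -
  have "A = (\<lambda>(k, m). (k, Base m)) ` base_part A"
    using assms by (auto simp: base_part_def image_iff)
  moreover have "inj_on (\<lambda>(k, m). (k, Base m)) (base_part A)" by (auto simp: inj_on_def)
  ultimately show ?thesis by (metis card_image)
qed

lemma card_set_part:
  assumes "\<forall>x\<in>A. \<exists>k X. x = (k, MSet X)"
  shows "card (set_part A) = card A" and "finite A \<Longrightarrow> finite (set_part A)"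
proof -
  have "A = (\<lambda>(k, X). (k, MSet X)) ` set_part A"
    using assms by (auto simp: set_part_def image_iff)
  moreover have "inj_on (\<lambda>(k, X). (k, MSet X)) (set_part A)" by (auto simp: inj_on_def)
  ultimately show "card (set_part A) = card A" "finite A \<Longrightarrow> finite (set_part A)"
    by (metis card_image, metis finite_image_iff)
qed

definition step_msgs :: "nat \<Rightarrow> 'm gstate \<Rightarrow> nat \<Rightarrow> (nat \<times> 'm) set" where
  "step_msgs n g s = {(k, m). k \<in> {1..n} \<and> inp (nd g k) s = Some m}"

lemma step_msgs_inj: "inj_on fst (step_msgs n g s)"
  unfolding inj_on_def step_msgs_def by auto

lemma step_msgs_senders: "fst ` step_msgs n g s \<subseteq> {1..n}"
  unfolding step_msgs_def by auto

lemma finite_step_msgs: "finite (step_msgs n g s)"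
  using finite_subset[OF step_msgs_senders] step_msgs_inj finite_image_iff by blast

lemma card_step_msgs: "card (step_msgs n g s) \<le> n"
proof -
  have "card (step_msgs n g s) = card (fst ` step_msgs n g s)"
    by (rule card_image[OF step_msgs_inj, symmetric])
  also have "\<dots> \<le> card {1..n}" by (rule card_mono[OF _ step_msgs_senders]) simp
  finally show ?thesis by simp
qed

locale tlcb_run =
  fixes n tr ts :: nat and st :: "nat \<Rightarrow> 'm gstate" and ev :: "nat \<Rightarrow> 'm event"
  assumes run: "run n tr ts st ev"
begin

lemma enabled_ev: "enabled n tr (st t) (ev t)" and st_Suc: "st (Suc t) = gstep n ts (st t) (ev t)"
  using run by (auto simp: run_def)

lemma reach_inv_st: "reach_inv n tr ts (st t)"
proof (induction t)
  case 0 then show ?case using run reach_inv_init by (simp add: run_def)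
next
  case (Suc t) then show ?case using reach_inv_gstep enabled_ev st_Suc by metis
qed

lemma node_inv_st: "node_inv tr ts (nd (st t) k)"
  and entries_sent_st: "entries_sent n (st t)"
  and chan_ok_st: "i \<in> {1..n} \<Longrightarrow> j \<in> {1..n} \<Longrightarrow> chan_ok tr (st t) j i"
  using reach_inv_st[of t] by (simp_all add: reach_inv_def)

lemma Rv_finite: "finite (Rv (nd (st t) i) q)"
  by (rule entries_sent_finite[OF entries_sent_st])

lemma node_extends_st: "t \<le> t' \<Longrightarrow> node_extends (nd (st t) k) (nd (st t') k)"
proof (induction t' rule: dec_induct)
  case base then show ?case by (rule node_extends_refl)
next
  case (step m)
  have "node_extends (nd (st m) k) (nd (st (Suc m)) k)"
    using node_extends_gstep[OF allI[OF node_inv_st] enabled_ev] st_Suc by metis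
  then show ?case using step node_extends_trans by blast
qed

lemma len_mono: "t \<le> t' \<Longrightarrow> len (nd (st t) k) \<le> len (nd (st t') k)"
  and Rv_frozen: "t \<le> t' \<Longrightarrow> q < len (nd (st t) k) \<Longrightarrow> Rv (nd (st t') k) q = Rv (nd (st t) k) q"
  and Rv_mono: "t \<le> t' \<Longrightarrow> Rv (nd (st t) k) q \<subseteq> Rv (nd (st t') k) q"
  and crashed_mono: "t \<le> t' \<Longrightarrow> crashed (nd (st t) k) \<Longrightarrow> crashed (nd (st t') k)"
  using node_extends_st unfolding node_extends_def by blast+

lemma inp_stable:
  assumes "t \<le> t'" "inp (nd (st t) k) c = Some m"
  shows "inp (nd (st t') k) c = Some m"
proof -
  have "c \<le> kstep (nd (st t) k)" using node_invD(2)[OF node_inv_st, of t k c] assms(2) by auto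
  then show ?thesis using node_extends_st[OF assms(1), of k] assms(2) unfolding node_extends_def by auto
qed

lemma inp_unique: "inp (nd (st t) k) c = Some m \<Longrightarrow> inp (nd (st t') k) c = Some m' \<Longrightarrow> m = m'"
  by (cases "t \<le> t'") (use inp_stable[of t t'] inp_stable[of t' t] in auto)

lemma progress_mono: "t \<le> t' \<Longrightarrow> progress (nd (st t) k) \<le> progress (nd (st t') k)"
proof (induction t' rule: dec_induct)
  case (step m)
  then show ?case using progress_gstep[OF enabled_ev[of m], where ts = ts and i = k] st_Suc[of m] by simp
qed simp

lemma delivered_Suc:
  "i \<in> {1..n} \<Longrightarrow> j \<in> {1..n} \<Longrightarrow>
    delivered (st (Suc t)) j i = delivered (st t) j i + (if ev t = Recv i j then 1 else 0)"
  using delivered_gstep[OF reach_inv_st enabled_ev] st_Suc by simp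

lemma delivered_mono:
  assumes "i \<in> {1..n}" "j \<in> {1..n}" "t \<le> t'"
  shows "delivered (st t) j i \<le> delivered (st t') j i"
  using assms(3)
proof (induction t' rule: dec_induct)
  case (step m) then show ?case using delivered_Suc[OF assms(1,2), of m] by simp
qed simp

subsection \<open>Safety\<close>

lemma base_entry:
  assumes "(k, p) \<in> Rv (nd (st t) i) (2 * s)"
  shows "k \<in> {1..n} \<and> (\<exists>m. p = Base m \<and> inp (nd (st t) k) s = Some m)"
proof -
  have P: "k \<in> {1..n}" "2 * s \<le> len (nd (st t) k)" "p = sent_payload (nd (st t) k) (2 * s)"
    using entries_sent_st assms unfolding entries_sent_def by blast+
  have "s \<noteq> 0" using assms node_invD(5)[OF node_inv_st[of t i], of 0] by (cases s) auto
  moreover have "s \<le> kstep (nd (st t) k)" using P(2) node_inv_len[OF node_inv_st, of t k] by simp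
  ultimately obtain m where "inp (nd (st t) k) s = Some m"
    using node_invD(2)[OF node_inv_st, of t k s] by auto
  then show ?thesis using P by (simp add: sent_payload_def)
qed

lemma base_part_subset_step_msgs: "base_part (Rv (nd (st t) i) (2 * s)) \<subseteq> step_msgs n (st t) s"
  unfolding base_part_def step_msgs_def using base_entry by fastforce

lemma card_base_part_st: "card (base_part (Rv (nd (st t) i) (2 * s))) = card (Rv (nd (st t) i) (2 * s))"
  by (rule card_base_part) (use base_entry in fastforce)

lemma set_entry:
  assumes "(k, p) \<in> Rv (nd (st t) i) (2 * s + 1)"
  shows "k \<in> {1..n} \<and> 2 * s + 1 \<le> len (nd (st t) k) \<and> p = MSet (base_part (Rv (nd (st t) k) (2 * s)))"
proof -
  have "k \<in> {1..n}" "2 * s + 1 \<le> len (nd (st t) k)" "p = sent_payload (nd (st t) k) (2 * s + 1)"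
    using entries_sent_st[of t] assms unfolding entries_sent_def by blast+
  then show ?thesis by (simp add: sent_payload_def)
qed

lemma step_msgs_witness:
  assumes S: "S \<subseteq> step_msgs n (st t) s" and c: "c \<le> card S"
  shows "\<exists>N\<subseteq>{1..n}. c \<le> card N \<and> (\<forall>j\<in>N. called st j s) \<and> S = msgs_of st N s"
proof (intro exI conjI)
  show "fst ` S \<subseteq> {1..n}" using S step_msgs_senders by blast
  show "c \<le> card (fst ` S)" using c card_image[OF inj_on_subset[OF step_msgs_inj S]] by simp
  show "\<forall>j\<in>fst ` S. called st j s"
    using S unfolding step_msgs_def called_def bcast_def by fastforce
  show "S = msgs_of st (fst ` S) s"
  proof
    show "S \<subseteq> msgs_of st (fst ` S) s"
      using S unfolding msgs_of_def step_msgs_def bcast_def by force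
    show "msgs_of st (fst ` S) s \<subseteq> S"
    proof
      fix x assume "x \<in> msgs_of st (fst ` S) s"
      then obtain j m t' m0 where x: "x = (j, m)" "inp (nd (st t') j) s = Some m" "(j, m0) \<in> S"
        unfolding msgs_of_def bcast_def by force
      then have "inp (nd (st t) j) s = Some m0" using S unfolding step_msgs_def by auto
      then show "x \<in> S" using inp_unique x by metis
    qed
  qed
qed

lemma out_st:
  assumes "out (nd (st t) i) s = Some (R, B)"
  defines "A \<equiv> Rv (nd (st t) i) (2 * s)" and "C \<equiv> Rv (nd (st t) i) (2 * s + 1)"
  shows "R = tlcb_R A C" "B = tlcb_B ts C" "tr \<le> card A" "tr \<le> card C"
proof -
  have l: "2 \<le> 2 * s" "2 * s < len (nd (st t) i)"
    "2 * s + 1 < len (nd (st t) i) \<or> (2 * s + 1 = len (nd (st t) i) \<and> ph (nd (st t) i) = Idle)"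
    using node_inv_out_len[OF node_inv_st assms(1)] by auto
  show "R = tlcb_R A C" "B = tlcb_B ts C"
    using node_invD(4)[OF node_inv_st assms(1)] unfolding A_def C_def by simp_all
  show "tr \<le> card A" "tr \<le> card C"
    using node_invD(6)[OF node_inv_st[of t i], of "2 * s"] node_invD(6)[OF node_inv_st[of t i], of "2 * s + 1"] l
    unfolding A_def C_def by auto
qed

lemma receive_threshold:
  assumes "returns st i s R B"
  shows "\<exists>NR\<subseteq>{1..n}. tr \<le> card NR \<and> (\<forall>j\<in>NR. called st j s) \<and> R = msgs_of st NR s"
proof -
  obtain t where o: "out (nd (st t) i) s = Some (R, B)" using assms unfolding returns_def by blast
  let ?A = "Rv (nd (st t) i) (2 * s)" and ?C = "Rv (nd (st t) i) (2 * s + 1)"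
  have R: "R = base_part ?A \<union> (\<Union>(j, X)\<in>set_part ?C. X)" using out_st(1)[OF o] by (simp add: tlcb_R_def)
  have RM: "R \<subseteq> step_msgs n (st t) s"
  proof -
    have "X \<subseteq> step_msgs n (st t) s" if "(j, X) \<in> set_part ?C" for j X
      using that set_entry[of j "MSet X" t i s] base_part_subset_step_msgs[of t j s]
      unfolding set_part_def by auto
    then show ?thesis using base_part_subset_step_msgs[of t i s] R by blast
  qed
  have "tr \<le> card (base_part ?A)" using out_st(3)[OF o] card_base_part_st by simp
  also have "\<dots> \<le> card R"
    using R RM finite_subset[OF RM finite_step_msgs] by (intro card_mono) auto
  finally show ?thesis using step_msgs_witness[OF RM] by blast
qed

lemma reports_st:
  assumes o: "out (nd (st t) i) s = Some (R, B)"
  defines "F \<equiv> set_part (Rv (nd (st t) i) (2 * s + 1))"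
  shows "finite F" "tr \<le> card F" "inj_on fst F" "B = {x. ts \<le> card {a \<in> F. x \<in> snd a}}"
    and "\<forall>a\<in>F. snd a \<subseteq> step_msgs n (st t) s \<and> tr \<le> card (snd a)"
proof -
  let ?C = "Rv (nd (st t) i) (2 * s + 1)"
  have s1: "1 \<le> s" using node_inv_out_len[OF node_inv_st o] by simp
  have C: "\<forall>x\<in>?C. \<exists>k X. x = (k, MSet X)" using set_entry by fast
  show "finite F" "tr \<le> card F"
    using card_set_part[OF C] Rv_finite out_st(4)[OF o] unfolding F_def by auto
  show "inj_on fst F"
    using entries_sent_unique[OF entries_sent_st] unfolding F_def set_part_def inj_on_def by fastforce
  have "{(j, X). (j, X) \<in> F \<and> x \<in> X} = {a \<in> F. x \<in> snd a}" for x by auto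
  then show "B = {x. ts \<le> card {a \<in> F. x \<in> snd a}}"
    using out_st(2)[OF o] unfolding tlcb_B_def F_def by simp
  show "\<forall>a\<in>F. snd a \<subseteq> step_msgs n (st t) s \<and> tr \<le> card (snd a)"
  proof
    fix a assume "a \<in> F"
    then obtain k X where a: "a = (k, X)" "(k, MSet X) \<in> ?C" unfolding F_def set_part_def by auto
    then have k: "2 * s < len (nd (st t) k)" "X = base_part (Rv (nd (st t) k) (2 * s))"
      using set_entry[OF a(2)] by auto
    have "tr \<le> card (Rv (nd (st t) k) (2 * s))"
      using node_invD(6)[OF node_inv_st[of t k], of "2 * s"] s1 k(1) by simp
    then show "snd a \<subseteq> step_msgs n (st t) s \<and> tr \<le> card (snd a)"
      using a k base_part_subset_step_msgs card_base_part_st by simp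
  qed
qed

lemma broadcast_threshold:
  assumes r: "returns st i s R B" and ts: "1 \<le> ts" "ts \<le> tr"
    and tb: "real tb \<le> real n - real tr * (real n - real tr) / (real tr - real ts + 1)"
  shows "\<exists>NB\<subseteq>{1..n}. tb \<le> card NB \<and> (\<forall>j\<in>NB. called st j s) \<and> B = msgs_of st NB s"
proof -
  obtain t where o: "out (nd (st t) i) s = Some (R, B)" using r unfolding returns_def by blast
  note F = reports_st[OF o]
  have "B \<subseteq> step_msgs n (st t) s"
    using threshold_double_count(1)[OF F(1) finite_step_msgs F(5) ts(1)] F(4) by simp
  moreover have "real n - real tr * (real n - real tr) / (real tr - real ts + 1) \<le> real (card B)"
    using threshold_card_lower_bound[OF F(1) finite_step_msgs F(5) ts F(2) card_step_msgs] F(4)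
    by simp
  then have "tb \<le> card B" using tb by linarith
  ultimately show ?thesis by (rule step_msgs_witness)
qed

lemma len_changed_not_crashed:
  "len (nd (st (Suc t)) j) \<noteq> len (nd (st t) j) \<Longrightarrow> \<not> crashed (nd (st (Suc t)) j)"
  using len_gstep_crashed[OF enabled_ev] st_Suc by metis

text \<open>Once j has completed TLCR step 2s, its set R' of TLCB step s is frozen; j was alive at
  that moment, so every execution agreeing with this one while j is alive returns R' inside
  the receive set of j.\<close>

lemma would_receive_reported:
  assumes jX: "(j, MSet X) \<in> Rv (nd (st t) i) (2 * s + 1)" and x: "x \<in> X"
  shows "would_receive n tr ts st j s x"
  unfolding would_receive_def
proof (intro allI impI)
  fix st' ev' R' B'
  assume run': "run n tr ts st' ev'" and agree: "\<forall>t. \<not> crashed (nd (st t) j) \<longrightarrow> st' t = st t"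
    and ret: "returns st' j s R' B'"
  interpret other: tlcb_run n tr ts st' ev' using run' by unfold_locales
  have X: "2 * s + 1 \<le> len (nd (st t) j)" "X = base_part (Rv (nd (st t) j) (2 * s))"
    using set_entry[OF jX] by auto
  define T where "T = (LEAST T. 2 * s + 1 \<le> len (nd (st T) j))"
  have Tt: "T \<le> t" unfolding T_def using X(1) by (rule Least_le)
  have TL: "2 * s + 1 \<le> len (nd (st T) j)" unfolding T_def using X(1) by (rule LeastI)
  have alive: "\<not> crashed (nd (st T) j)" if "T \<noteq> 0"
  proof -
    obtain T0 where T0: "T = Suc T0" using \<open>T \<noteq> 0\<close> by (cases T) auto
    then have "\<not> 2 * s + 1 \<le> len (nd (st T0) j)"
      unfolding T_def by (intro not_less_Least) simp
    then show ?thesis using TL T0 len_changed_not_crashed by fastforce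
  qed
  have agT: "st' T = st T"
    using agree alive run run' by (cases "T = 0") (auto simp: run_def)
  obtain t' where o: "out (nd (st' t') j) s = Some (R', B')" using ret unfolding returns_def by blast
  have "T \<le> t'"
  proof (rule ccontr)
    assume "\<not> T \<le> t'"
    then have "\<not> crashed (nd (st t') j)" using alive crashed_mono[of t' T j] by auto
    then have "2 * s + 1 \<le> len (nd (st t') j)"
      using agree node_inv_out_len[OF other.node_inv_st o] by auto
    then have "T \<le> t'" unfolding T_def by (rule Least_le)
    with \<open>\<not> T \<le> t'\<close> show False by simp
  qed
  have "base_part (Rv (nd (st' t') j) (2 * s)) \<subseteq> R'"
    using other.out_st(1)[OF o] by (auto simp: tlcb_R_def)
  moreover have "Rv (nd (st' t') j) (2 * s) = Rv (nd (st T) j) (2 * s)"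
    using other.Rv_frozen[OF \<open>T \<le> t'\<close>] TL agT by simp
  moreover have "Rv (nd (st t) j) (2 * s) = Rv (nd (st T) j) (2 * s)"
    using Rv_frozen[OF Tt] TL by simp
  ultimately show "x \<in> R'" using x X(2) by auto
qed

lemma spread_threshold:
  assumes r: "returns st i s R B" and xB: "x \<in> B"
  shows "\<exists>NS\<subseteq>{1..n}. ts \<le> card NS \<and> (\<forall>j\<in>NS. would_receive n tr ts st j s x)"
proof -
  obtain t where o: "out (nd (st t) i) s = Some (R, B)" using r unfolding returns_def by blast
  let ?C = "Rv (nd (st t) i) (2 * s + 1)"
  define S where "S = {a \<in> set_part ?C. x \<in> snd a}"
  note F = reports_st[OF o]
  have "ts \<le> card S" using xB F(4) unfolding S_def by simp
  also have "\<dots> = card (fst ` S)"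
    by (rule card_image[OF inj_on_subset[OF F(3)], symmetric]) (auto simp: S_def)
  finally have c: "ts \<le> card (fst ` S)" .
  have S: "(j, MSet X) \<in> ?C \<and> x \<in> X" if "(j, X) \<in> S" for j X
    using that unfolding S_def set_part_def by auto
  have "fst ` S \<subseteq> {1..n}" using set_entry S by force
  moreover have "\<forall>j\<in>fst ` S. would_receive n tr ts st j s x"
  proof
    fix j assume "j \<in> fst ` S"
    then obtain X where "(j, X) \<in> S" by force
    then show "would_receive n tr ts st j s x" using S would_receive_reported by blast
  qed
  ultimately show ?thesis using c by blast
qed

end

section \<open>Liveness\<close>

lemma weakly_fair_occurs:
  assumes "weakly_fair tr P st ev n" and "e \<in> P" and "\<forall>t\<ge>t0. enabled n tr (st t) e"
  shows "\<exists>t\<ge>t0. ev t \<in> P"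
proof -
  obtain t where "t0 \<le> t" "(\<forall>e\<in>P. \<not> enabled n tr (st t) e) \<or> ev t \<in> P"
    using assms(1) unfolding weakly_fair_def by blast
  then show ?thesis using assms(2,3) by blast
qed

context tlcb_run
begin

lemma eventually_quiet:
  assumes bd: "\<And>t. len (nd (st t) i) \<le> L"
  obtains T where
    "\<And>t. T \<le> t \<Longrightarrow> len (nd (st t) i) = len (nd (st T) i) \<and>
      (ph (nd (st t) i) = Idle \<longleftrightarrow> ph (nd (st T) i) = Idle)"
    "\<And>t. T \<le> t \<Longrightarrow> ev t \<notin> range (Call i) \<and> ev t \<noteq> Complete i"
proof -
  have "progress (nd (st t) i) \<le> 3 * L + 2" for t
    using progress_le_len[OF node_inv_st[of t i]] bd[of t] by linarith
  then obtain T where T: "\<And>t. T \<le> t \<Longrightarrow> progress (nd (st t) i) = progress (nd (st T) i)"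
    using bounded_mono_eventually_const[of "\<lambda>t. progress (nd (st t) i)"] progress_mono
    unfolding mono_def by blast
  show ?thesis
  proof
    show "len (nd (st t) i) = len (nd (st T) i) \<and> (ph (nd (st t) i) = Idle \<longleftrightarrow> ph (nd (st T) i) = Idle)"
      if "T \<le> t" for t
      by (rule progress_eq_len[OF node_inv_st node_inv_st T[OF that]])
    show "ev t \<notin> range (Call i) \<and> ev t \<noteq> Complete i" if "T \<le> t" for t
      using T[OF that] T[OF le_SucI[OF that]] progress_gstep[OF enabled_ev[of t], where ts = ts and i = i]
        st_Suc[of t] by (auto split: if_splits)
  qed
qed

end

locale tlcb_fair_run = tlcb_run +
  assumes fair: "fair n tr st ev"
begin

lemma fair_Call:
  assumes "i \<in> {1..n}" "\<forall>t\<ge>t0. enabled n tr (st t) (Call i m)"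
  shows "\<exists>t\<ge>t0. ev t \<in> range (Call i)"
proof -
  have "weakly_fair tr {Call i m | m. True} st ev n" using fair assms(1) by (simp add: fair_def)
  then obtain t where "t0 \<le> t" "ev t \<in> {Call i m | m. True}"
    using weakly_fair_occurs[OF _ _ assms(2)] by blast
  then show ?thesis by blast
qed

lemma fair_Complete:
  assumes "i \<in> {1..n}" "\<forall>t\<ge>t0. enabled n tr (st t) (Complete i)"
  shows "\<exists>t\<ge>t0. ev t = Complete i"
proof -
  have "weakly_fair tr {Complete i} st ev n" using fair assms(1) by (simp add: fair_def)
  then show ?thesis using weakly_fair_occurs[OF _ _ assms(2)] by blast
qed

lemma fair_Recv:
  assumes "i \<in> {1..n}" "j \<in> {1..n}" "\<forall>t\<ge>t0. enabled n tr (st t) (Recv i j)"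
  shows "\<exists>t\<ge>t0. ev t = Recv i j"
proof -
  have "weakly_fair tr {Recv i j} st ev n" using fair assms(1,2) by (simp add: fair_def)
  then show ?thesis using weakly_fair_occurs[OF _ _ assms(3)] by blast
qed

definition blocked_from :: "nat \<Rightarrow> nat \<Rightarrow> bool" where
  "blocked_from i T \<longleftrightarrow> (\<forall>t\<ge>T. \<not> crashed (nd (st t) i) \<and> ph (nd (st t) i) \<noteq> Idle \<and>
     card (cur_R (nd (st t) i)) < tr \<and> len (nd (st t) i) = len (nd (st T) i))"

lemma eventually_blocked:
  assumes i: "i \<in> {1..n}" and alive: "\<not> failed st i" and bd: "\<And>t. len (nd (st t) i) \<le> L"
  shows "\<exists>T. blocked_from i T"
proof -
  obtain T where same: "\<And>t. T \<le> t \<Longrightarrow> len (nd (st t) i) = len (nd (st T) i) \<and>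
      (ph (nd (st t) i) = Idle \<longleftrightarrow> ph (nd (st T) i) = Idle)"
    and quiet: "\<And>t. T \<le> t \<Longrightarrow> ev t \<notin> range (Call i) \<and> ev t \<noteq> Complete i"
    using eventually_quiet[OF bd] by blast
  have nc: "\<not> crashed (nd (st t) i)" for t using alive by (simp add: failed_def)
  have busy: "ph (nd (st T) i) \<noteq> Idle"
  proof
    assume idle: "ph (nd (st T) i) = Idle"
    have "\<forall>t\<ge>T. enabled n tr (st t) (Call i undefined)"
      using i nc same idle by (simp add: enabled_def)
    then show False using fair_Call[OF i] quiet by blast
  qed
  have "card (cur_R (nd (st t) i)) < tr" if "T \<le> t" for t
  proof (rule ccontr)
    assume "\<not> card (cur_R (nd (st t) i)) < tr"
    moreover have "card (cur_R (nd (st t) i)) \<le> card (cur_R (nd (st t') i))" if "t \<le> t'" for t'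
    proof -
      have "len (nd (st t') i) = len (nd (st t) i)"
        using same[OF \<open>T \<le> t\<close>] same[OF le_trans[OF \<open>T \<le> t\<close> that]] by simp
      then have "cur_R (nd (st t) i) \<subseteq> cur_R (nd (st t') i)"
        using Rv_mono[OF that, of i] unfolding cur_R_def by simp
      then show ?thesis using Rv_finite unfolding cur_R_def by (simp add: card_mono)
    qed
    moreover have "ph (nd (st t') i) \<noteq> Idle" if "t \<le> t'" for t'
      using same[OF le_trans[OF \<open>T \<le> t\<close> that]] busy by simp
    ultimately have "\<forall>t'\<ge>t. enabled n tr (st t') (Complete i)"
      using i nc by (fastforce simp: enabled_def)
    then obtain t' where "t \<le> t'" "ev t' = Complete i" using fair_Complete[OF i] by blast
    then show False using quiet \<open>T \<le> t\<close> by simp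
  qed
  then show ?thesis unfolding blocked_from_def using nc same busy by blast
qed

lemma eventually_delivered:
  assumes ij: "i \<in> {1..n}" "j \<in> {1..n}" and blocked: "blocked_from i T" and "T \<le> t"
  shows "\<exists>t'\<ge>t. len (nd (st t) j) \<le> delivered (st t') j i"
proof (rule ccontr)
  assume "\<not> ?thesis"
  then have pending: "delivered (st t') j i < len (nd (st t) j)" if "t \<le> t'" for t'
    using that by force
  have "\<exists>t2\<ge>t1. delivered (st t1) j i < delivered (st t2) j i" if "t \<le> t1" for t1
  proof -
    have "chan (st t') j i \<noteq> []" if "t \<le> t'" for t'
      using pending[OF that] len_mono[OF that, of j] by (auto simp: delivered_def)
    moreover have "\<not> crashed (nd (st t') i) \<and> ph (nd (st t') i) \<noteq> Idle \<and> card (cur_R (nd (st t') i)) < tr"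
      if "t \<le> t'" for t'
      using blocked le_trans[OF \<open>T \<le> t\<close> that] unfolding blocked_from_def by blast
    ultimately have "\<forall>t'\<ge>t1. enabled n tr (st t') (Recv i j)"
      using \<open>t \<le> t1\<close> ij unfolding enabled_def by simp
    then obtain t2 where "t1 \<le> t2" "ev t2 = Recv i j" using fair_Recv[OF ij] by blast
    then show ?thesis
      using delivered_mono[OF ij \<open>t1 \<le> t2\<close>] delivered_Suc[OF ij, of t2] by (intro exI[of _ "Suc t2"]) auto
  qed
  then obtain t' where "t \<le> t'" "len (nd (st t) j) \<le> delivered (st t') j i"
    using unbounded_if_always_increases[where f = "\<lambda>t. delivered (st t) j i" and t = t
        and k = "len (nd (st t) j)"] by blast
  with pending[of t'] show False by simp
qed

lemma blocked_from_mono: "blocked_from i T \<Longrightarrow> T \<le> T' \<Longrightarrow> blocked_from i T'"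
  unfolding blocked_from_def by (metis order_trans)

lemma blocked_bounds_all:
  assumes ij: "i \<in> {1..n}" "j \<in> {1..n}" and blocked: "blocked_from i T"
  shows "len (nd (st t) j) \<le> len (nd (st T) i)"
proof -
  obtain t' where t': "max T t \<le> t'" "len (nd (st (max T t)) j) \<le> delivered (st t') j i"
    using eventually_delivered[OF ij blocked max.cobounded1] by blast
  have "T \<le> t'" using t'(1) by simp
  then have "card (cur_R (nd (st t') i)) < tr" "len (nd (st t') i) = len (nd (st T) i)"
    using blocked unfolding blocked_from_def by blast+
  moreover have "delivery_ok tr (delivered (st t') j i) (nd (st t') i)"
    by (rule chan_ok_delivered(4)[OF chan_ok_st[OF ij]])
  ultimately have "delivered (st t') j i \<le> len (nd (st T) i)" by (auto simp: delivery_ok_def)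
  moreover have "len (nd (st t) j) \<le> len (nd (st (max T t)) j)" by (rule len_mono) simp
  ultimately show ?thesis using t'(2) by linarith
qed

lemma len_st_0: "len (nd (st 0) k) = 1"
  using run by (simp add: run_def init_state_def init_node_def)

lemma first_reach_undelivered:
  assumes ij: "i \<in> {1..n}" "j \<in> {1..n}" and L: "2 \<le> L" "L \<le> len (nd (st t) j)"
  shows "delivered (st (LEAST t. L \<le> len (nd (st t) j))) j i < L"
proof -
  define Tj where "Tj = (LEAST t. L \<le> len (nd (st t) j))"
  have reach: "L \<le> len (nd (st Tj) j)"
    unfolding Tj_def by (rule LeastI[where P = "\<lambda>t. L \<le> len (nd (st t) j)", OF L(2)])
  then have "Tj \<noteq> 0" using L(1) len_st_0[of j] by (intro notI) simp
  then obtain T' where T': "Tj = Suc T'" by (cases Tj) auto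
  then have before: "\<not> L \<le> len (nd (st T') j)" unfolding Tj_def by (intro not_less_Least) simp
  with reach have "ev T' \<noteq> Recv i j" using T' st_Suc[of T'] by (auto simp: len_Recv)
  then have "delivered (st Tj) j i = delivered (st T') j i" using delivered_Suc[OF ij, of T'] T' by simp
  also have "\<dots> \<le> len (nd (st T') j)" by (rule chan_ok_delivered(2)[OF chan_ok_st[OF ij]])
  finally show ?thesis using before unfolding Tj_def by simp
qed

lemma blocked_receives:
  assumes ij: "i \<in> {1..n}" "j \<in> {1..n}" and blocked: "blocked_from i T"
  defines "L \<equiv> len (nd (st T) i)"
  assumes reached: "len (nd (st t0) i) = L" and pending: "delivered (st t0) j i < L"
    and sent: "L \<le> len (nd (st t0) j)"
  shows "\<exists>t. j \<in> fst ` Rv (nd (st t) i) L"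
proof -
  have len_i: "len (nd (st t) i) = L" if "t0 \<le> t" for t
  proof (cases "T \<le> t")
    case True then show ?thesis using blocked unfolding blocked_from_def L_def by blast
  next
    case False then show ?thesis using len_mono[OF that, of i] len_mono[of t T i] reached L_def by simp
  qed
  obtain t' where t': "max T t0 \<le> t'" "len (nd (st (max T t0)) j) \<le> delivered (st t') j i"
    using eventually_delivered[OF ij blocked max.cobounded1] by blast
  have "L \<le> len (nd (st (max T t0)) j)" using sent len_mono[of t0 "max T t0" j] by simp
  then obtain tc where tc: "t0 \<le> tc" "delivered (st tc) j i = L - 1" "delivered (st (Suc tc)) j i = L"
    using unit_step_crossing[where f = "\<lambda>t. delivered (st t) j i" and a = t0 and b = t' and c = "L - 1"]
      delivered_Suc[OF ij] pending t' by fastforce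
  have L2: "2 \<le> L" using blocked node_inv_busy[OF node_inv_st] unfolding blocked_from_def L_def by blast
  have "ev tc = Recv i j" using delivered_Suc[OF ij, of tc] tc L2 by (auto split: if_splits)
  then have step: "nd (st (Suc tc)) i = recv_update (hd (chan (st tc) j i)) (nd (st tc) i)"
    using st_Suc[of tc] by (simp add: nd_Recv)
  have "L \<le> len (nd (st tc) j)" using sent len_mono[OF tc(1), of j] by simp
  then have "[Suc (L - 1)..<Suc (len (nd (st tc) j))] = L # [Suc L..<Suc (len (nd (st tc) j))]"
    using L2 by (simp add: upt_conv_Cons)
  then have "hd (chan (st tc) j i) = (j, sent_payload (nd (st tc) j) L, L, Rv (nd (st tc) j) (L - 1))"
    using chan_ok_delivered(3)[OF chan_ok_st[OF ij], of tc] tc(2) by (simp add: sent_msg_def)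
  then have "(j, sent_payload (nd (st tc) j) L) \<in> Rv (nd (st (Suc tc)) i) L"
    using step len_i[OF tc(1)] by (simp add: Rv_recv_update)
  then show ?thesis by force
qed

lemma blocked_misses:
  assumes blocked: "blocked_from i T"
    and got: "\<forall>j\<in>N. \<exists>t. j \<in> fst ` Rv (nd (st t) i) (len (nd (st T) i))" and N: "finite N"
  shows "card N < tr"
proof -
  let ?L = "len (nd (st T) i)"
  obtain h where h: "\<forall>j\<in>N. j \<in> fst ` Rv (nd (st (h j)) i) ?L" using got by metis
  define B where "B = max T (Max (insert 0 (h ` N)))"
  have "N \<subseteq> fst ` Rv (nd (st B) i) ?L"
  proof
    fix j assume "j \<in> N"
    then have "h j \<le> B" using N unfolding B_def by (simp add: max.coboundedI2)
    then show "j \<in> fst ` Rv (nd (st B) i) ?L" using h \<open>j \<in> N\<close> Rv_mono[of "h j" B i ?L] by blast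
  qed
  then have "card N \<le> card (fst ` Rv (nd (st B) i) ?L)" using Rv_finite by (intro card_mono) auto
  also have "\<dots> = card (cur_R (nd (st B) i))"
    using entries_sent_card_fst[OF entries_sent_st] blocked unfolding blocked_from_def cur_R_def B_def
    by (metis max.cobounded1)
  also have "\<dots> < tr" using blocked unfolding blocked_from_def B_def by simp
  finally show ?thesis .
qed

text \<open>The alive node k that reaches step L first blocks there, yet every alive node sends
  its step-L message only after k got there.\<close>

lemma stuck_at_step_few_alive:
  assumes i: "i \<in> {1..n}" "\<not> failed st i"
    and reach: "\<And>j. j \<in> {1..n} \<Longrightarrow> \<not> failed st j \<Longrightarrow> \<exists>t. L \<le> len (nd (st t) j)"
    and bd: "\<And>j t. j \<in> {1..n} \<Longrightarrow> len (nd (st t) j) \<le> L"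
  shows "card {j \<in> {1..n}. \<not> failed st j} < tr"
proof -
  define NF where "NF = {j \<in> {1..n}. \<not> failed st j}"
  define Tf where "Tf j = (LEAST t. L \<le> len (nd (st t) j))" for j
  have Tf: "L \<le> len (nd (st (Tf j)) j)" if "j \<in> NF" for j
    using reach that unfolding NF_def Tf_def by (metis (mono_tags, lifting) LeastI mem_Collect_eq)
  obtain k where k: "k \<in> NF" "\<forall>j\<in>NF. Tf k \<le> Tf j"
    using ex_has_least_nat[of "\<lambda>j. j \<in> NF" i Tf] i unfolding NF_def by auto
  have k1: "k \<in> {1..n}" "\<not> failed st k" using k(1) unfolding NF_def by auto
  obtain Tk where "blocked_from k Tk" using eventually_blocked[OF k1 bd[OF k1(1)]] by blast
  define T where "T = max Tk (Tf k)"
  have blocked: "blocked_from k T" using blocked_from_mono \<open>blocked_from k Tk\<close> T_def by simp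
  have lenk: "len (nd (st t) k) = L" if "Tf k \<le> t" for t
    using len_mono[OF that, of k] Tf[OF k(1)] bd[OF k1(1)] le_antisym by blast
  have "ph (nd (st T) k) \<noteq> Idle" using blocked unfolding blocked_from_def by blast
  then have "2 \<le> len (nd (st T) k)" by (rule node_inv_busy[OF node_inv_st])
  then have L2: "2 \<le> L" using lenk[of T] unfolding T_def by simp
  have "\<forall>j\<in>NF. \<exists>t. j \<in> fst ` Rv (nd (st t) k) (len (nd (st T) k))"
  proof
    fix j assume j: "j \<in> NF"
    then have j1: "j \<in> {1..n}" unfolding NF_def by simp
    have "delivered (st (Tf j)) j k < L"
      unfolding Tf_def by (rule first_reach_undelivered[OF k1(1) j1 L2 Tf[OF j, unfolded Tf_def]])
    moreover have "len (nd (st (Tf j)) k) = L" "len (nd (st T) k) = L"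
      using lenk k(2) j unfolding T_def by auto
    ultimately show "\<exists>t. j \<in> fst ` Rv (nd (st t) k) (len (nd (st T) k))"
      using blocked_receives[OF k1(1) j1 blocked, of "Tf j"] Tf[OF j] by simp
  qed
  then show ?thesis unfolding NF_def by (rule blocked_misses[OF blocked]) simp
qed

lemma alive_len_unbounded:
  assumes alive_card: "tr \<le> card {i \<in> {1..n}. \<not> failed st i}"
  shows "i \<in> {1..n} \<Longrightarrow> \<not> failed st i \<Longrightarrow> \<exists>t. L \<le> len (nd (st t) i)"
proof (induction L arbitrary: i)
  case 0 then show ?case by simp
next
  case (Suc L)
  show ?case
  proof (rule ccontr)
    assume "\<not> ?case"
    then have bd_i: "len (nd (st t) i) \<le> L" for t by (meson not_less_eq_eq)
    then obtain T where "blocked_from i T" using eventually_blocked[OF Suc.prems] by blast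
    then have "len (nd (st t) j) \<le> L" if "j \<in> {1..n}" for j t
      using blocked_bounds_all[OF Suc.prems(1) that] bd_i le_trans by blast
    then have "card {i \<in> {1..n}. \<not> failed st i} < tr"
      using stuck_at_step_few_alive[OF Suc.prems Suc.IH] by blast
    with alive_card show False by simp
  qed
qed

lemma lock_step:
  assumes "tr \<le> card {i \<in> {1..n}. \<not> failed st i}" and i: "i \<in> {1..n}" "\<not> failed st i"
    and "called st i s"
  shows "\<exists>R B. returns st i s R B"
proof -
  obtain m t0 where "inp (nd (st t0) i) s = Some m"
    using assms(4) unfolding called_def bcast_def by blast
  then have s1: "1 \<le> s" using node_invD(2)[OF node_inv_st, of t0 i s] by auto
  obtain t where "2 * s + 2 \<le> len (nd (st t) i)" using alive_len_unbounded[OF assms(1) i] by blast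
  then have "s < kstep (nd (st t) i)" using node_inv_len[OF node_inv_st, of t i] by simp
  then obtain R B where "out (nd (st t) i) s = Some (R, B)"
    using node_invD(3)[OF node_inv_st, of t i s] s1 by auto
  then show ?thesis unfolding returns_def by blast
qed

end

theorem theorem3:
  fixes n f tr ts tb :: nat
    and st :: "nat \<Rightarrow> 'm gstate" and ev :: "nat \<Rightarrow> 'm event"
  assumes "0 < tr" and "tr \<le> n - f"
    and "0 < ts" and "ts \<le> tr"
    and "0 < tb"
    and "real tb \<le> real n - real tr * (real n - real tr) / (real tr - real ts + 1)"
    and "run n tr ts st ev" and "fair n tr st ev"
    and "card {i \<in> {1..n}. failed st i} \<le> f"
  shows "TSB n tr tb ts st"
proof -
  interpret tlcb_fair_run n tr ts st ev
    using assms(7,8) by unfold_locales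
  have "card {i \<in> {1..n}. \<not> failed st i} = card ({1..n} - {i \<in> {1..n}. failed st i})"
    by (rule arg_cong[where f = card]) auto
  also have "\<dots> = n - card {i \<in> {1..n}. failed st i}" by (subst card_Diff_subset) auto
  finally have alive: "tr \<le> card {i \<in> {1..n}. \<not> failed st i}" using assms(2,9) by simp
  have "1 \<le> ts" using assms(3) by simp
  show ?thesis
    unfolding TSB_def
  proof (intro conjI allI ballI impI)
    show "(\<exists>R B. returns st i s R B) \<or> failed st i" if "i \<in> {1..n}" "called st i s" for i s
      using lock_step[OF alive that(1) _ that(2)] by blast
  next
    show "\<exists>NR\<subseteq>{1..n}. tr \<le> card NR \<and> (\<forall>j\<in>NR. called st j s) \<and> R = msgs_of st NR s"
      if "returns st i s R B" for i s R B
      using that by (rule receive_threshold)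
    show "\<exists>NB\<subseteq>{1..n}. tb \<le> card NB \<and> (\<forall>j\<in>NB. called st j s) \<and> B = msgs_of st NB s"
      if "returns st i s R B" for i s R B
      using that \<open>1 \<le> ts\<close> assms(4,6) by (rule broadcast_threshold)
    show "\<exists>NS\<subseteq>{1..n}. ts \<le> card NS \<and> (\<forall>j\<in>NS. would_receive n tr ts st j s x)"
      if "returns st i s R B \<and> x \<in> B" for i s R B x
      using that by (blast intro: spread_threshold)
  qed
qed

end
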